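(* Let $\chi(1),\dots,\chi(L)\in\mathbb C$, let $\kappa=L$ and $\nu(a)=a+\frac{\chi(a)}2$ ($a=1,\dots,L$). Then each of the operators $z_i^{\pm1}$, $d_i$ ($1\le i\le n$) and $K_{i,i+1}P_{i,i+1}$ ($1\le i\le n-1$) on $\mathfrak V$ (equivalently, the image of the degenerate double affine Hecke algebra under the representation $\pi_{\kappa,\nu}$: $t_{\epsilon_i}\mapsto z_i^{-1}$, $\epsilon_i^\vee\mapsto -d_i$, $c\mapsto\kappa$, $s_i\mapsto K_{i,i+1}P_{i,i+1}$) leaves invariant the subspace $\mathrm U'(\mathfrak b^\chi)\mathfrak V$.
   Context: $L\ge2$, $n\ge1$. $\mathfrak V=\mathbb C[z_1^{\pm1},\dots,z_n^{\pm1}]\otimes(\mathbb C^L)^{\otimes n}\cong(\mathbb C[z^{\pm1}]\otimes\mathbb C^L)^{\otimes n}$; $e_{ab}$ are matrix units of $\mathbb C^L$, $X_i$ denotes $X\in\mathrm{End}\,\mathbb C^L$ acting on tensor factor $i$; $K_{ij}$ swaps $z_i,z_j$, $P_{ij}$ swaps tensor factors $i,j$ of $(\mathbb C^L)^{\otimes n}$; $r_{ij}=\frac12\sum_a(e_{aa})_i(e_{aa})_j+\sum_{a<b}(e_{ab})_i(e_{ba})_j$; $\nu_i=\sum_a\nu(a)(e_{aa})_i$. Dunkl operators: $d_i=\kappa z_i\partial_{z_i}+\nu_i+\frac n{2L}-\frac12+\sum_{j>i}\big(\frac{z_j}{z_j-z_i}(K_{ij}-1)P_{ij}+r_{ij}\big)-\sum_{j<i}\big(\frac{z_i}{z_i-z_j}(K_{ij}-1)P_{ij}+r_{ji}\big)$.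 $\widehat{\mathfrak{sl}}_L$ acts on $\mathbb C[z^{\pm1}]\otimes\mathbb C^L$ by $e_{L-a}\mapsto e_{a+1,a}$, $f_{L-a}\mapsto e_{a,a+1}$, $h_{L-a}\mapsto e_{a+1,a+1}-e_{aa}$ ($1\le a\le L-1$), $e_0\mapsto z e_{1L}$, $f_0\mapsto z^{-1}e_{L1}$, and on $\mathfrak V$ diagonally (sum over factors). $\mathrm U'(\mathfrak b^\chi)$ is the non-unital associative subalgebra of $\mathrm U(\widehat{\mathfrak{sl}}_L)$ generated by $h_a^\chi:=h_a-(\chi(L+1-a)-\chi(L-a))\cdot1$ ($a=1,\dots,L-1$) and $f_0,\dots,f_{L-1}$. *)

theory Defs
  imports Complex_Main "HOL-Library.Poly_Mapping"
begin

text \<open>A Laurent polynomial is a finitely supported map from exponent vectors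
  (finitely supported maps nat => int, variable index => exponent) to complex
  coefficients; multiplication is the convolution product of Poly_Mapping.\<close>

type_synonym lpoly = "(nat \<Rightarrow>\<^sub>0 int) \<Rightarrow>\<^sub>0 complex"

definition Zpow :: "nat \<Rightarrow> int \<Rightarrow> lpoly" where
  "Zpow i k = Poly_Mapping.single (Poly_Mapping.single i k) 1"

abbreviation Zv :: "nat \<Rightarrow> lpoly" where
  "Zv i \<equiv> Zpow i 1"

definition sw :: "nat \<Rightarrow> nat \<Rightarrow> nat \<Rightarrow> nat" where
  "sw i j k = (if k = i then j else if k = j then i else k)"

definition Kswap :: "nat \<Rightarrow> nat \<Rightarrow> lpoly \<Rightarrow> lpoly" where
  "Kswap i j p = Poly_Mapping.map_key (Poly_Mapping.map_key (sw i j)) p"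

text \<open>The Euler operator z_i d/dz_i.\<close>
definition euler :: "nat \<Rightarrow> lpoly \<Rightarrow> lpoly" where
  "euler i p = Poly_Mapping.mapp (\<lambda>m c. of_int (Poly_Mapping.lookup m i) * c) p"

text \<open>The operator p |-> z_a/(z_a - z_b) (K_ab - 1) p on Laurent polynomials,
  i.e. the (unique) Laurent polynomial q with (z_a - z_b) q = z_a (K_ab p - p).\<close>
definition ddiv :: "nat \<Rightarrow> nat \<Rightarrow> lpoly \<Rightarrow> lpoly" where
  "ddiv a b p = (THE q. (Zv a - Zv b) * q = Zv a * (Kswap a b p - p))"

text \<open>An element of V is represented by its coefficient (a Laurent polynomial)
  at each basis tensor e_{c 1} (x) ... (x) e_{c n}, where the colouring c
  (tensor factors 1..n, colours 1..L) is a function nat => nat.\<close>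

type_synonym vect = "(nat \<Rightarrow> nat) \<Rightarrow> lpoly"

definition cols :: "nat \<Rightarrow> nat \<Rightarrow> (nat \<Rightarrow> nat) set" where
  "cols n L = {c. (\<forall>i. (i \<in> {1..n} \<longrightarrow> c i \<in> {1..L}) \<and> (i \<notin> {1..n} \<longrightarrow> c i = 0))}"

definition Vsp :: "nat \<Rightarrow> nat \<Rightarrow> vect set" where
  "Vsp n L = {v. (\<forall>c. v c \<noteq> 0 \<longrightarrow> c \<in> cols n L) \<and>
                 (\<forall>c. \<forall>m \<in> Poly_Mapping.keys (v c). Poly_Mapping.keys m \<subseteq> {1..n})}"

text \<open>(e_ab)_i: matrix unit e_ab acting on tensor factor i (e_ab e_x = [b=x] e_a).\<close>
definition Eu :: "nat \<Rightarrow> nat \<Rightarrow> nat \<Rightarrow> vect \<Rightarrow> vect" where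
  "Eu a b i v = (\<lambda>c. if c i = a then v (c(i := b)) else 0)"

definition Pswap :: "nat \<Rightarrow> nat \<Rightarrow> vect \<Rightarrow> vect" where
  "Pswap i j v = (\<lambda>c. v (c \<circ> sw i j))"

definition zmul :: "nat \<Rightarrow> int \<Rightarrow> vect \<Rightarrow> vect" where
  "zmul i k v = (\<lambda>c. Zpow i k * v c)"

definition KV :: "nat \<Rightarrow> nat \<Rightarrow> vect \<Rightarrow> vect" where
  "KV i j v = (\<lambda>c. Kswap i j (v c))"

definition sK :: "nat \<Rightarrow> vect \<Rightarrow> vect" where
  "sK i v = KV i (Suc i) (Pswap i (Suc i) v)"

definition rop :: "nat \<Rightarrow> nat \<Rightarrow> nat \<Rightarrow> vect \<Rightarrow> vect" where
  "rop L i j v = (\<lambda>c. Poly_Mapping.single 0 (1/2) * (\<Sum>a\<in>{1..L}. Eu a a i (Eu a a j v) c)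
       + (\<Sum>a\<in>{1..L}. \<Sum>b\<in>{a<..L}. Eu a b i (Eu b a j v) c))"

definition nuop :: "(nat \<Rightarrow> complex) \<Rightarrow> nat \<Rightarrow> nat \<Rightarrow> vect \<Rightarrow> vect" where
  "nuop \<nu> L i v = (\<lambda>c. \<Sum>a\<in>{1..L}. Poly_Mapping.single 0 (\<nu> a) * Eu a a i v c)"

definition DD :: "nat \<Rightarrow> nat \<Rightarrow> vect \<Rightarrow> vect" where
  "DD a b v = (\<lambda>c. ddiv a b (Pswap a b v c))"

definition scaleV :: "complex \<Rightarrow> vect \<Rightarrow> vect" where
  "scaleV s v = (\<lambda>c. Poly_Mapping.single 0 s * v c)"

text \<open>The Dunkl operator d_i.  Note z_j/(z_j-z_i)(K_ij-1)P_ij = DD j i and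
  z_i/(z_i-z_j)(K_ij-1)P_ij = DD i j (K_ij, P_ij are symmetric in i,j).\<close>
definition dunkl :: "complex \<Rightarrow> (nat \<Rightarrow> complex) \<Rightarrow> nat \<Rightarrow> nat \<Rightarrow> nat \<Rightarrow> vect \<Rightarrow> vect" where
  "dunkl \<kappa> \<nu> n L i v = (\<lambda>c.
      Poly_Mapping.single 0 \<kappa> * euler i (v c)
    + nuop \<nu> L i v c
    + Poly_Mapping.single 0 (of_nat n / (2 * of_nat L) - 1/2) * v c
    + (\<Sum>j\<in>{i<..n}. DD j i v c + rop L i j v c)
    - (\<Sum>j\<in>{1..<i}. DD i j v c + rop L j i v c))"

text \<open>f_b for 0 <= b <= L-1 acting diagonally on V:
  f_{L-a} |-> e_{a,a+1} (1 <= a <= L-1), f_0 |-> z^{-1} e_{L1}.\<close>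
definition f_act :: "nat \<Rightarrow> nat \<Rightarrow> nat \<Rightarrow> vect \<Rightarrow> vect" where
  "f_act n L b v = (\<lambda>c. \<Sum>i\<in>{1..n}.
      (if b = 0 then zmul i (-1) (Eu L 1 i v) c
       else Eu (L - b) (L - b + 1) i v c))"

text \<open>h_b for 1 <= b <= L-1: h_{L-a} |-> e_{a+1,a+1} - e_{aa}, diagonally.\<close>
definition h_act :: "nat \<Rightarrow> nat \<Rightarrow> nat \<Rightarrow> vect \<Rightarrow> vect" where
  "h_act n L b v = (\<lambda>c. \<Sum>i\<in>{1..n}.
      Eu (L - b + 1) (L - b + 1) i v c - Eu (L - b) (L - b) i v c)"

definition hchi_act :: "(nat \<Rightarrow> complex) \<Rightarrow> nat \<Rightarrow> nat \<Rightarrow> nat \<Rightarrow> vect \<Rightarrow> vect" where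
  "hchi_act \<chi> n L b v = (\<lambda>c. h_act n L b v c
      - Poly_Mapping.single 0 (\<chi> (L + 1 - b) - \<chi> (L - b)) * v c)"

definition bgens :: "(nat \<Rightarrow> complex) \<Rightarrow> nat \<Rightarrow> nat \<Rightarrow> (vect \<Rightarrow> vect) set" where
  "bgens \<chi> n L = {hchi_act \<chi> n L b | b. b \<in> {1..L-1}} \<union> {f_act n L b | b. b \<in> {0..L-1}}"

text \<open>U'(b^chi) V: the span of all x v with v in V and x a (nonempty)
  product of generators.\<close>
inductive_set UbV :: "(nat \<Rightarrow> complex) \<Rightarrow> nat \<Rightarrow> nat \<Rightarrow> vect set"
  for \<chi> :: "nat \<Rightarrow> complex" and n L :: nat where
  gen:  "g \<in> bgens \<chi> n L \<Longrightarrow> v \<in> Vsp n L \<Longrightarrow> g v \<in> UbV \<chi> n L"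
| word: "g \<in> bgens \<chi> n L \<Longrightarrow> w \<in> UbV \<chi> n L \<Longrightarrow> g w \<in> UbV \<chi> n L"
| zero: "(\<lambda>c. 0) \<in> UbV \<chi> n L"
| add:  "w \<in> UbV \<chi> n L \<Longrightarrow> w' \<in> UbV \<chi> n L \<Longrightarrow> (\<lambda>c. w c + w' c) \<in> UbV \<chi> n L"
| smul: "w \<in> UbV \<chi> n L \<Longrightarrow> scaleV s w \<in> UbV \<chi> n L"

end

theory Submission
  imports Defs "HOL-Combinatorics.Transposition"
begin

(*
  U'(b^chi) V is spanned by the vectors g_1 ... g_k v with generators g_j and v in V, and it lies
  in V; hence a linear operator T preserves it as soon as T (g v) lies in U'(b^chi) V for every
  generator g and every v in V.  Multiplication by z_i^(+-1) and s_i = K_(i,i+1) P_(i,i+1) commute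
  with all generators.  For the Dunkl operator d_i we compute on the basis of V indexed by
  colourings c : {1..n} -> {1..L}: d_i commutes with every h^chi_b, and
    d_i f_(L-a) = f_(L-a) (d_i + 1/2 (e_aa - e_(a+1,a+1))_i) + 1/2 h^chi_(L-a) (e_(a,a+1))_i,
    d_i f_0 = f_0 (d_i + 1/2 (e_LL - e_11)_i) - 1/2 (sum_b h^chi_b) z_i^(-1) (e_(L,1))_i.
  The diagonal terms recombine into h^chi-terms exactly for kappa = L and nu(a) = a + chi(a)/2,
  and then both right-hand sides lie in U'(b^chi) V.
  The divided differences z_a/(z_a - z_b) (K_ab - 1) are well defined on Laurent polynomials
  because K_ab p - p is divisible by z_a - z_b and Laurent polynomials form an integral domain.
*)

lemma sum_eq_except_one:
  fixes f g :: "'a \<Rightarrow> 'b::ab_group_add"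
  assumes "finite A" "i \<in> A" "\<And>k. k \<in> A \<Longrightarrow> k \<noteq> i \<Longrightarrow> f k = g k"
  shows "sum f A = sum g A + (f i - g i)"
proof -
  have "sum f (A - {i}) = sum g (A - {i})" using assms(3) by (intro sum.cong) auto
  then show ?thesis using sum.remove[OF assms(1,2), of f] sum.remove[OF assms(1,2), of g] by simp
qed

lemma sum_eq_except_two:
  fixes f g :: "'a \<Rightarrow> 'b::ab_group_add"
  assumes "finite A" "i \<in> A" "j \<in> A" "i \<noteq> j"
    and "\<And>k. k \<in> A \<Longrightarrow> k \<noteq> i \<Longrightarrow> k \<noteq> j \<Longrightarrow> f k = g k"
  shows "sum f A = sum g A + ((f i - g i) + (f j - g j))"
proof -
  let ?g = "\<lambda>k. if k = j then f j else g k"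
  have "sum f A = sum ?g A + (f i - ?g i)"
    using assms by (intro sum_eq_except_one) auto
  moreover have "sum ?g A = sum g A + (f j - g j)"
    using sum_eq_except_one[OF assms(1,3), of ?g g] by simp
  ultimately show ?thesis using assms(4) by (simp add: algebra_simps)
qed

lemma sum_split_at:
  assumes "(i::nat) \<in> {1..n}"
  shows "(\<Sum>j\<in>{1..n} - {i}. f j) = (\<Sum>j\<in>{i<..n}. f j) + (\<Sum>j\<in>{1..<i}. f j)"
proof -
  have "{1..n} - {i} = {i<..n} \<union> {1..<i}" using assms by auto
  moreover have "sum f ({i<..n} \<union> {1..<i}) = sum f {i<..n} + sum f {1..<i}"
    by (rule sum.union_disjoint) auto
  ultimately show ?thesis by simp
qed

subsection \<open>Laurent polynomials\<close>

lemma lookup_single_mult: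
  fixes p :: "'a::ab_group_add \<Rightarrow>\<^sub>0 'b::semiring_0"
  shows "Poly_Mapping.lookup (Poly_Mapping.single m c * p) k = c * Poly_Mapping.lookup p (k - m)"
proof -
  have "Poly_Mapping.lookup (Poly_Mapping.single m c * p) k =
        (\<Sum>l. Poly_Mapping.lookup (Poly_Mapping.single m c) l * (\<Sum>q. Poly_Mapping.lookup p q when k = l + q))"
    by (rule lookup_mult)
  also have "\<dots> = c * (\<Sum>q. Poly_Mapping.lookup p q when k = m + q)"
    by (subst Sum_any.cong[where h = "\<lambda>l. c * (\<Sum>q. Poly_Mapping.lookup p q when k = l + q) when l = m"])
       (auto simp: lookup_single when_def)
  also have "(\<Sum>q. Poly_Mapping.lookup p q when k = m + q) = (\<Sum>q. Poly_Mapping.lookup p q when q = k - m)"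
    by (rule Sum_any.cong) (auto simp: when_def algebra_simps)
  finally show ?thesis by simp
qed

lemma Zpow_add: "Zpow i a * Zpow i b = Zpow i (a + b)"
  by (simp add: Zpow_def mult_single single_add)

lemma Zpow_0 [simp]: "Zpow i 0 = 1"
  by (simp add: Zpow_def)

lemma Zpow_inverse: "Zpow i k * Zpow i (- k) = 1"
  by (simp add: Zpow_add)

definition lconst :: "complex \<Rightarrow> lpoly" where
  "lconst s = Poly_Mapping.single 0 s"

lemma lconst_add: "lconst (x + y) = lconst x + lconst y"
  by (simp add: lconst_def single_add)

lemma lconst_diff: "lconst (x - y) = lconst x - lconst y"
  by (simp add: lconst_def single_diff)

lemma lconst_uminus: "lconst (- x) = - lconst x"
  by (simp add: lconst_def single_uminus)

lemma lconst_mult: "lconst (x * y) = lconst x * lconst y"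
  by (simp add: lconst_def mult_single)

lemma lconst_0 [simp]: "lconst 0 = 0"
  and lconst_1 [simp]: "lconst 1 = 1"
  and lconst_minus_1 [simp]: "lconst (- 1) = - 1"
  by (simp_all add: lconst_def single_uminus)

lemma lconst_sum: "lconst (sum f A) = (\<Sum>x\<in>A. lconst (f x))"
  by (induction A rule: infinite_finite_induct) (simp_all add: lconst_add)

lemma lconst_half: "2 * lconst (1 / 2) = 1"
  by (simp add: mult_2 lconst_add[symmetric])

definition lpolys :: "nat \<Rightarrow> lpoly set" where
  "lpolys n = {p. \<forall>m\<in>Poly_Mapping.keys p. Poly_Mapping.keys m \<subseteq> {1..n}}"

lemma lpolys_single: "Poly_Mapping.keys m \<subseteq> {1..n} \<Longrightarrow> Poly_Mapping.single m c \<in> lpolys n"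
  by (simp add: lpolys_def)

lemma lpolys_single_0 [simp]: "Poly_Mapping.single 0 s \<in> lpolys n"
  and lpolys_lconst [simp]: "lconst s \<in> lpolys n"
  and lpolys_zero [simp]: "0 \<in> lpolys n"
  by (simp_all add: lpolys_def lconst_def)

lemma lpolys_Zpow [simp]: "i \<in> {1..n} \<Longrightarrow> Zpow i k \<in> lpolys n"
  by (simp add: lpolys_def Zpow_def)

lemma lpolys_add [simp]: "p \<in> lpolys n \<Longrightarrow> q \<in> lpolys n \<Longrightarrow> p + q \<in> lpolys n"
  using keys_add[of p q] by (auto simp: lpolys_def)

lemma lpolys_uminus [simp]: "p \<in> lpolys n \<Longrightarrow> - p \<in> lpolys n"
  by (simp add: lpolys_def)

lemma lpolys_diff [simp]: "p \<in> lpolys n \<Longrightarrow> q \<in> lpolys n \<Longrightarrow> p - q \<in> lpolys n"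
  using lpolys_add[of p n "- q"] by simp

lemma lpolys_mult [simp]:
  assumes "p \<in> lpolys n" "q \<in> lpolys n"
  shows "p * q \<in> lpolys n"
  unfolding lpolys_def
proof (intro CollectI ballI)
  fix m assume "m \<in> Poly_Mapping.keys (p * q)"
  then obtain x y where "m = x + y" "x \<in> Poly_Mapping.keys p" "y \<in> Poly_Mapping.keys q"
    using keys_mult by blast
  then show "Poly_Mapping.keys m \<subseteq> {1..n}"
    using assms keys_add[of x y] unfolding lpolys_def by blast
qed

lemma lpolys_sum [simp]: "(\<And>x. x \<in> A \<Longrightarrow> f x \<in> lpolys n) \<Longrightarrow> sum f A \<in> lpolys n"
  by (induction A rule: infinite_finite_induct) auto

lemma poly_mapping_sum_single:
  "p = (\<Sum>m\<in>Poly_Mapping.keys p. Poly_Mapping.single m (Poly_Mapping.lookup p m))"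
  by (rule poly_mapping_eqI) (simp add: lookup_sum lookup_single when_def in_keys_iff)

lemma sw_eq_transpose: "sw = Transposition.transpose"
  by (simp add: fun_eq_iff sw_def transpose_def)

lemma sw_sw [simp]: "sw i j (sw i j k) = k"
  by (simp add: sw_eq_transpose)

lemma sw_commute: "sw i j = sw j i"
  by (simp add: sw_eq_transpose transpose_commute)

lemma inj_sw [simp]: "inj (sw i j)"
  by (simp add: sw_eq_transpose inj_transpose)

lemma sw_image: "i \<in> A \<Longrightarrow> j \<in> A \<Longrightarrow> sw i j ` A = A"
  by (simp add: sw_eq_transpose)

lemma sw_in_iff: "i \<in> A \<Longrightarrow> j \<in> A \<Longrightarrow> sw i j k \<in> A \<longleftrightarrow> k \<in> A"
  by (auto simp: sw_def)

lemma sum_reindex_sw: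
  assumes "i \<in> A" "j \<in> A"
  shows "(\<Sum>k\<in>A. f (sw i j k)) = (\<Sum>k\<in>A. f k)"
proof -
  have "sum f (sw i j ` A) = (\<Sum>k\<in>A. f (sw i j k))"
    by (rule sum.reindex[unfolded o_def], rule inj_on_subset[OF inj_sw]) simp
  then show ?thesis using sw_image[OF assms] by simp
qed

lemma comp_sw_upd: "c \<circ> sw i j = c(i := c j, j := c i)"
  by (auto simp: fun_eq_iff sw_def)

lemma upd_comp_sw: "c(k := t) \<circ> sw i j = (c \<circ> sw i j)(sw i j k := t)"
  by (auto simp: fun_eq_iff sw_def)

lemma comp_sw_sw [simp]: "c \<circ> sw i j \<circ> sw i j = c"
  by (auto simp: fun_eq_iff)

definition swap_exps :: "nat \<Rightarrow> nat \<Rightarrow> (nat \<Rightarrow>\<^sub>0 int) \<Rightarrow> (nat \<Rightarrow>\<^sub>0 int)" where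
  "swap_exps i j m = Poly_Mapping.map_key (sw i j) m"

lemma lookup_swap_exps [simp]: "Poly_Mapping.lookup (swap_exps i j m) k = Poly_Mapping.lookup m (sw i j k)"
  by (simp add: swap_exps_def map_key.rep_eq)

lemma swap_exps_swap_exps [simp]: "swap_exps i j (swap_exps i j m) = m"
  by (rule poly_mapping_eqI) simp

lemma swap_exps_diff: "swap_exps i j (m - m') = swap_exps i j m - swap_exps i j m'"
  by (rule poly_mapping_eqI) (simp add: lookup_minus)

lemma swap_exps_single [simp]: "swap_exps i j (Poly_Mapping.single k e) = Poly_Mapping.single (sw i j k) e"
  by (rule poly_mapping_eqI) (auto simp: lookup_single when_def)

lemma swap_exps_0 [simp]: "swap_exps i j 0 = 0"
  by (rule poly_mapping_eqI) simp

lemma swap_exps_eq: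
  assumes "a \<noteq> b"
  shows "swap_exps a b m = m + Poly_Mapping.single a (Poly_Mapping.lookup m b - Poly_Mapping.lookup m a)
                       + Poly_Mapping.single b (Poly_Mapping.lookup m a - Poly_Mapping.lookup m b)"
  by (rule poly_mapping_eqI) (use assms in \<open>auto simp: lookup_add lookup_single when_def sw_def\<close>)

lemma lookup_Kswap: "Poly_Mapping.lookup (Kswap i j p) m = Poly_Mapping.lookup p (swap_exps i j m)"
proof -
  have "inj (Poly_Mapping.map_key (sw i j) :: (nat \<Rightarrow>\<^sub>0 int) \<Rightarrow> _)"
    by (metis injI swap_exps_def swap_exps_swap_exps)
  then show ?thesis by (simp add: Kswap_def map_key.rep_eq swap_exps_def)
qed

lemma Kswap_zero [simp]: "Kswap i j 0 = 0"
  and Kswap_add: "Kswap i j (p + q) = Kswap i j p + Kswap i j q"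
  and Kswap_diff: "Kswap i j (p - q) = Kswap i j p - Kswap i j q"
  by (rule poly_mapping_eqI; simp add: lookup_Kswap lookup_add lookup_minus)+

lemma Kswap_sum: "Kswap i j (sum f A) = (\<Sum>x\<in>A. Kswap i j (f x))"
  by (induction A rule: infinite_finite_induct) (auto simp: Kswap_add)

lemma Kswap_single: "Kswap i j (Poly_Mapping.single m c) = Poly_Mapping.single (swap_exps i j m) c"
  by (rule poly_mapping_eqI) (auto simp: lookup_Kswap lookup_single when_def)

lemma Kswap_single_mult:
  "Kswap i j (Poly_Mapping.single m c * p) = Poly_Mapping.single (swap_exps i j m) c * Kswap i j p"
  by (rule poly_mapping_eqI) (simp add: lookup_Kswap lookup_single_mult swap_exps_diff)

lemma Kswap_Zpow_mult: "Kswap i j (Zpow k e * p) = Zpow (sw i j k) e * Kswap i j p"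
  by (simp add: Zpow_def Kswap_single_mult)

lemma Kswap_lconst_mult: "Kswap i j (lconst s * p) = lconst s * Kswap i j p"
  using Kswap_single_mult[of i j 0 s p] by (simp add: lconst_def)

lemma Kswap_lconst [simp]: "Kswap i j (lconst s) = lconst s"
  using Kswap_single[of i j 0 s] by (simp add: lconst_def)

lemma Kswap_Zpow [simp]: "Kswap i j (Zpow k e) = Zpow (sw i j k) e"
  by (simp add: Zpow_def Kswap_single)

lemma Kswap_mult: "Kswap i j (p * q) = Kswap i j p * Kswap i j q"
proof -
  have "Kswap i j (p * q)
      = (\<Sum>m\<in>Poly_Mapping.keys p. Kswap i j (Poly_Mapping.single m (Poly_Mapping.lookup p m) * q))"
    by (subst poly_mapping_sum_single) (simp add: sum_distrib_right Kswap_sum)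
  also have "\<dots> = Kswap i j p * Kswap i j q"
    by (subst (3) poly_mapping_sum_single)
       (simp add: Kswap_single_mult Kswap_sum Kswap_single sum_distrib_right)
  finally show ?thesis .
qed

lemma lpolys_Kswap [simp]:
  assumes "i \<in> {1..n}" "j \<in> {1..n}" "p \<in> lpolys n"
  shows "Kswap i j p \<in> lpolys n"
  unfolding lpolys_def
proof (intro CollectI ballI subsetI)
  fix m x assume m: "m \<in> Poly_Mapping.keys (Kswap i j p)" and x: "x \<in> Poly_Mapping.keys m"
  have "swap_exps i j m \<in> Poly_Mapping.keys p"
    using m by (simp add: in_keys_iff lookup_Kswap)
  moreover have "sw i j x \<in> Poly_Mapping.keys (swap_exps i j m)"
    using x by (simp add: in_keys_iff)
  ultimately have "sw i j x \<in> {1..n}"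
    using assms(3) unfolding lpolys_def by blast
  then show "x \<in> {1..n}" using sw_in_iff[OF assms(1,2)] by blast
qed

lemma lookup_euler: "Poly_Mapping.lookup (euler i p) m = of_int (Poly_Mapping.lookup m i) * Poly_Mapping.lookup p m"
  by (auto simp: euler_def lookup_mapp when_def in_keys_iff)

lemma euler_zero [simp]: "euler i 0 = 0"
  and euler_add: "euler i (p + q) = euler i p + euler i q"
  by (rule poly_mapping_eqI; simp add: lookup_euler lookup_add algebra_simps)+

lemma euler_sum: "euler i (sum f A) = (\<Sum>x\<in>A. euler i (f x))"
  by (induction A rule: infinite_finite_induct) (auto simp: euler_add)

lemma euler_single_mult:
  "euler i (Poly_Mapping.single m c * p)
     = Poly_Mapping.single m c * euler i p + lconst (of_int (Poly_Mapping.lookup m i)) * (Poly_Mapping.single m c * p)"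
  by (rule poly_mapping_eqI)
     (simp only: lookup_euler lookup_add lookup_single_mult lconst_def, simp add: lookup_minus algebra_simps)

lemma euler_lconst_mult: "euler i (lconst s * p) = lconst s * euler i p"
  using euler_single_mult[of i 0 s p] by (simp add: lconst_def)

lemma euler_Zpow_mult:
  "euler i (Zpow k e * p) = Zpow k e * euler i p + (if k = i then lconst (of_int e) * (Zpow k e * p) else 0)"
  by (simp add: Zpow_def euler_single_mult lookup_single when_def)

lemma lpolys_euler [simp]: "p \<in> lpolys n \<Longrightarrow> euler i p \<in> lpolys n"
  using keys_mapp_subset[of _ p] by (auto simp: euler_def lpolys_def)

subsection \<open>The divided difference operator\<close>

lemma Zv_eq_iff [simp]: "Zv a = Zv b \<longleftrightarrow> a = b"
  unfolding Zpow_def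
  by (metis frag_of_eq lookup_single_eq lookup_single_not_eq zero_neq_one)

(* Poly_Mapping orders monomials, which makes lpoly an integral domain; so z_a - z_b cancels. *)
lemma ddiv_unique:
  assumes "a \<noteq> b" and "(Zv a - Zv b) * q = Zv a * (Kswap a b p - p)"
  shows "ddiv a b p = q"
  unfolding ddiv_def
proof (rule the_equality)
  fix q' assume "(Zv a - Zv b) * q' = Zv a * (Kswap a b p - p)"
  then have "(Zv a - Zv b) * (q' - q) = 0" using assms(2) by (simp add: right_diff_distrib)
  then show "q' = q" using assms(1) by simp
qed (rule assms(2))

definition Zdiff_multiples :: "nat \<Rightarrow> nat \<Rightarrow> nat \<Rightarrow> lpoly set" where
  "Zdiff_multiples n a b = {(Zv a - Zv b) * q | q. q \<in> lpolys n}"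

lemma Zdiff_multiples_zero [simp]: "0 \<in> Zdiff_multiples n a b"
  unfolding Zdiff_multiples_def by (auto intro!: exI[of _ 0])

lemma Zdiff_multiples_add:
  "x \<in> Zdiff_multiples n a b \<Longrightarrow> y \<in> Zdiff_multiples n a b \<Longrightarrow> x + y \<in> Zdiff_multiples n a b"
  unfolding Zdiff_multiples_def by (auto, metis distrib_left lpolys_add)

lemma Zdiff_multiples_mult:
  "r \<in> lpolys n \<Longrightarrow> x \<in> Zdiff_multiples n a b \<Longrightarrow> r * x \<in> Zdiff_multiples n a b"
proof -
  assume "r \<in> lpolys n" "x \<in> Zdiff_multiples n a b"
  then obtain q where "q \<in> lpolys n" "x = (Zv a - Zv b) * q"
    unfolding Zdiff_multiples_def by blast
  then show ?thesis
    using \<open>r \<in> lpolys n\<close> unfolding Zdiff_multiples_def by (auto simp: mult.left_commute)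
qed

lemma Zdiff_multiples_sum:
  "(\<And>x. x \<in> A \<Longrightarrow> f x \<in> Zdiff_multiples n a b) \<Longrightarrow> sum f A \<in> Zdiff_multiples n a b"
  by (induction A rule: infinite_finite_induct) (simp_all add: Zdiff_multiples_add)

lemma Zpow_ratio_minus_1_in_Zdiff_multiples:
  assumes a: "a \<in> {1..n}" and b: "b \<in> {1..n}"
  shows "Zpow a t * Zpow b (- t) - 1 \<in> Zdiff_multiples n a b"
proof -
  let ?R = "\<lambda>t. Zpow a t * Zpow b (- t)"
  have R_lpolys: "?R t \<in> lpolys n" for t using a b by simp
  have R_add: "?R (t + s) = ?R t * ?R s" for t s
    using Zpow_add[of a t s] Zpow_add[of b "- t" "- s"] by (simp add: ac_simps)
  have step: "?R (t + s) - 1 \<in> Zdiff_multiples n a b"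
    if "?R t - 1 \<in> Zdiff_multiples n a b" "?R s - 1 \<in> Zdiff_multiples n a b" for t s
  proof -
    have "?R (t + s) - 1 = ?R t * (?R s - 1) + (?R t - 1)"
      unfolding R_add by (simp add: algebra_simps)
    then show ?thesis using that R_lpolys by (metis Zdiff_multiples_add Zdiff_multiples_mult)
  qed
  have "?R 1 - 1 = (Zv a - Zv b) * Zpow b (- 1)"
    using Zpow_inverse[of b 1] by (simp add: left_diff_distrib)
  then have up: "?R 1 - 1 \<in> Zdiff_multiples n a b"
    using b unfolding Zdiff_multiples_def by auto
  have "?R (- 1) - 1 = (Zv a - Zv b) * (- Zpow a (- 1))"
    using Zpow_inverse[of a 1] by (simp add: algebra_simps)
  then have down: "?R (- 1) - 1 \<in> Zdiff_multiples n a b"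
    using a unfolding Zdiff_multiples_def by (auto intro!: exI[of _ "- Zpow a (- 1)"])
  show ?thesis
  proof (induction t rule: int_induct[where k = 0])
    case base
    then show ?case by simp
  next
    case (step1 t)
    then show ?case using step[OF _ up] by simp
  next
    case (step2 t)
    then show ?case using step[OF _ down] by simp
  qed
qed

(* z^(swap m) - z^m = z^m ((z_a / z_b)^t - 1) with t = m_b - m_a. *)
lemma Kswap_monomial_diff_in_Zdiff_multiples:
  assumes a: "a \<in> {1..n}" and b: "b \<in> {1..n}" and ab: "a \<noteq> b" and m: "Poly_Mapping.keys m \<subseteq> {1..n}"
  shows "Poly_Mapping.single (swap_exps a b m) c - Poly_Mapping.single m c \<in> Zdiff_multiples n a b"
proof -
  define t where "t = Poly_Mapping.lookup m b - Poly_Mapping.lookup m a"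
  have "Poly_Mapping.single (swap_exps a b m) c = Poly_Mapping.single m c * (Zpow a t * Zpow b (- t))"
    by (simp add: swap_exps_eq[OF ab] t_def Zpow_def mult_single add.assoc)
  then have "Poly_Mapping.single (swap_exps a b m) c - Poly_Mapping.single m c
      = Poly_Mapping.single m c * (Zpow a t * Zpow b (- t) - 1)"
    by (simp add: right_diff_distrib)
  then show ?thesis
    using Zdiff_multiples_mult[OF lpolys_single[OF m] Zpow_ratio_minus_1_in_Zdiff_multiples[OF a b]] by simp
qed

lemma ddiv_spec:
  assumes a: "a \<in> {1..n}" and b: "b \<in> {1..n}" and ab: "a \<noteq> b" and p: "p \<in> lpolys n"
  shows "(Zv a - Zv b) * ddiv a b p = Zv a * (Kswap a b p - p)" and "ddiv a b p \<in> lpolys n"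
proof -
  have "Kswap a b p - p = (\<Sum>m\<in>Poly_Mapping.keys p.
      Poly_Mapping.single (swap_exps a b m) (Poly_Mapping.lookup p m) - Poly_Mapping.single m (Poly_Mapping.lookup p m))"
    by (subst (1 3) poly_mapping_sum_single) (simp add: Kswap_sum Kswap_single sum_subtractf)
  also have "\<dots> \<in> Zdiff_multiples n a b"
    using p by (intro Zdiff_multiples_sum Kswap_monomial_diff_in_Zdiff_multiples[OF a b ab])
      (auto simp: lpolys_def)
  finally have "Zv a * (Kswap a b p - p) \<in> Zdiff_multiples n a b"
    using a by (simp add: Zdiff_multiples_mult)
  then obtain q where q: "q \<in> lpolys n" "Zv a * (Kswap a b p - p) = (Zv a - Zv b) * q"
    unfolding Zdiff_multiples_def by blast
  then have "ddiv a b p = q" by (intro ddiv_unique[OF ab]) simp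
  then show "(Zv a - Zv b) * ddiv a b p = Zv a * (Kswap a b p - p)" "ddiv a b p \<in> lpolys n"
    using q by simp_all
qed

lemma lpolys_ddiv [simp]:
  "a \<in> {1..n} \<Longrightarrow> b \<in> {1..n} \<Longrightarrow> a \<noteq> b \<Longrightarrow> p \<in> lpolys n \<Longrightarrow> ddiv a b p \<in> lpolys n"
  by (rule ddiv_spec(2))

lemma ddiv_zero [simp]: "a \<noteq> b \<Longrightarrow> ddiv a b 0 = 0"
  by (rule ddiv_unique) simp_all

context
  fixes n a b :: nat
  assumes a: "a \<in> {1..n}" and b: "b \<in> {1..n}" and ab: "a \<noteq> b"
begin

lemma ddiv_add:
  assumes "p \<in> lpolys n" "q \<in> lpolys n"
  shows "ddiv a b (p + q) = ddiv a b p + ddiv a b q"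
  using ddiv_spec(1)[OF a b ab assms(1)] ddiv_spec(1)[OF a b ab assms(2)]
  by (intro ddiv_unique[OF ab]) (simp add: Kswap_add algebra_simps)

lemma ddiv_sum:
  assumes "\<And>x. x \<in> A \<Longrightarrow> f x \<in> lpolys n"
  shows "ddiv a b (sum f A) = (\<Sum>x\<in>A. ddiv a b (f x))"
  using assms by (induction A rule: infinite_finite_induct) (simp_all add: ab ddiv_add)

lemma ddiv_mult:
  assumes "p \<in> lpolys n" "r \<in> lpolys n"
  shows "ddiv a b (r * p) = Kswap a b r * ddiv a b p + ddiv a b r * p"
  using ddiv_spec(1)[OF a b ab assms(1)] ddiv_spec(1)[OF a b ab assms(2)]
  by (intro ddiv_unique[OF ab]) (simp only: Kswap_mult, algebra)

lemma ddiv_lconst_mult: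
  assumes "p \<in> lpolys n"
  shows "ddiv a b (lconst s * p) = lconst s * ddiv a b p"
proof -
  have "ddiv a b (lconst s) = 0"
    by (rule ddiv_unique[OF ab]) simp
  then show ?thesis
    using ddiv_mult[OF assms lpolys_lconst] by simp
qed

lemma ddiv_Zpow_minus_1:
  "ddiv a b (Zpow m (- 1)) = (if m = a then Zpow b (- 1) else if m = b then - Zpow b (- 1) else 0)"
proof (rule ddiv_unique[OF ab])
  have inv: "Zv a * Zpow a (- 1) = 1" "Zv b * Zpow b (- 1) = 1"
    using Zpow_inverse[of a 1] Zpow_inverse[of b 1] by simp_all
  show "(Zv a - Zv b) * (if m = a then Zpow b (- 1) else if m = b then - Zpow b (- 1) else 0)
      = Zv a * (Kswap a b (Zpow m (- 1)) - Zpow m (- 1))"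
    using inv ab by (auto simp: sw_def algebra_simps)
qed

lemma ddiv_Zpow_minus_1_mult:
  assumes p: "p \<in> lpolys n" and k: "k \<in> {1..n}"
  shows "ddiv a b (Zpow (sw a b k) (- 1) * p) = Zpow k (- 1) * ddiv a b p
           + (if k = b then Zpow b (- 1) * p else if k = a then - (Zpow b (- 1) * p) else 0)"
  using ddiv_mult[OF p lpolys_Zpow[OF sw_in_iff[OF a b, THEN iffD2, OF k]]] ab
  by (simp add: ddiv_Zpow_minus_1 sw_def)

end

subsection \<open>Colourings and the space V\<close>

lemma cols_upd: "c \<in> cols n L \<Longrightarrow> i \<in> {1..n} \<Longrightarrow> b \<in> {1..L} \<Longrightarrow> c(i := b) \<in> cols n L"
  by (simp add: cols_def)

lemma cols_upd_rev: "c(i := b) \<in> cols n L \<Longrightarrow> i \<in> {1..n} \<Longrightarrow> c i \<in> {1..L} \<Longrightarrow> c \<in> cols n L"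
  using cols_upd[of "c(i := b)" n L i "c i"] by simp

lemma cols_range: "c \<in> cols n L \<Longrightarrow> k \<in> {1..n} \<Longrightarrow> c k \<in> {1..L}"
  by (simp add: cols_def)

lemma cols_outside: "c \<in> cols n L \<Longrightarrow> k \<notin> {1..n} \<Longrightarrow> c k = 0"
  by (simp add: cols_def)

lemma comp_sw_cols_iff:
  assumes "i \<in> {1..n}" "j \<in> {1..n}"
  shows "c \<circ> sw i j \<in> cols n L \<longleftrightarrow> c \<in> cols n L"
proof -
  have "c \<circ> sw i j \<in> cols n L" if "c \<in> cols n L" for c
    unfolding cols_def
    using cols_range[OF that] cols_outside[OF that] sw_in_iff[OF assms] by auto
  then show ?thesis by (metis comp_sw_sw)
qed

lemma Vsp_iff: "v \<in> Vsp n L \<longleftrightarrow> (\<forall>c. c \<notin> cols n L \<longrightarrow> v c = 0) \<and> (\<forall>c. v c \<in> lpolys n)"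
  unfolding Vsp_def lpolys_def by blast

lemma VspI: "(\<And>c. c \<notin> cols n L \<Longrightarrow> v c = 0) \<Longrightarrow> (\<And>c. v c \<in> lpolys n) \<Longrightarrow> v \<in> Vsp n L"
  by (simp add: Vsp_iff)

lemma Vsp_vanishes: "v \<in> Vsp n L \<Longrightarrow> c \<notin> cols n L \<Longrightarrow> v c = 0"
  by (simp add: Vsp_iff)

lemma Vsp_lpolys [simp]: "v \<in> Vsp n L \<Longrightarrow> v c \<in> lpolys n"
  by (simp add: Vsp_iff)

lemma Vsp_eqI:
  assumes "v \<in> Vsp n L" "w \<in> Vsp n L" "\<And>c. c \<in> cols n L \<Longrightarrow> v c = w c"
  shows "v = w"
proof
  fix c show "v c = w c"
    using assms by (cases "c \<in> cols n L") (simp_all add: Vsp_vanishes)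
qed

lemma Vsp_zero [simp]: "(\<lambda>c. 0) \<in> Vsp n L"
  and Vsp_add [simp]: "v \<in> Vsp n L \<Longrightarrow> w \<in> Vsp n L \<Longrightarrow> (\<lambda>c. v c + w c) \<in> Vsp n L"
  and Vsp_diff [simp]: "v \<in> Vsp n L \<Longrightarrow> w \<in> Vsp n L \<Longrightarrow> (\<lambda>c. v c - w c) \<in> Vsp n L"
  and Vsp_mult [simp]: "v \<in> Vsp n L \<Longrightarrow> (\<And>c. f c \<in> lpolys n) \<Longrightarrow> (\<lambda>c. f c * v c) \<in> Vsp n L"
  and Vsp_euler [simp]: "v \<in> Vsp n L \<Longrightarrow> (\<lambda>c. euler i (v c)) \<in> Vsp n L"
  by (rule VspI; simp add: Vsp_vanishes)+

lemma Vsp_lconst_mult [simp]: "v \<in> Vsp n L \<Longrightarrow> (\<lambda>c. lconst s * v c) \<in> Vsp n L"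
  and Vsp_scaleV [simp]: "v \<in> Vsp n L \<Longrightarrow> scaleV s v \<in> Vsp n L"
  by (simp_all add: scaleV_def lconst_def[symmetric])

lemma Vsp_sum [simp]:
  "(\<And>x. x \<in> A \<Longrightarrow> f x \<in> Vsp n L) \<Longrightarrow> (\<lambda>c. \<Sum>x\<in>A. f x c) \<in> Vsp n L"
proof (rule VspI)
  fix c
  assume "\<And>x. x \<in> A \<Longrightarrow> f x \<in> Vsp n L"
  then show "c \<notin> cols n L \<Longrightarrow> (\<Sum>x\<in>A. f x c) = 0"
    and "(\<Sum>x\<in>A. f x c) \<in> lpolys n"
    by (metis Vsp_vanishes sum.neutral, metis Vsp_lpolys lpolys_sum)
qed

lemma Vsp_Eu [simp]:
  assumes "v \<in> Vsp n L" "a \<in> {1..L}" "b \<in> {1..L}" "i \<in> {1..n}"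
  shows "Eu a b i v \<in> Vsp n L"
proof (rule VspI)
  fix c assume "c \<notin> cols n L"
  then have "c i = a \<Longrightarrow> c(i := b) \<notin> cols n L"
    using cols_upd_rev assms(2,4) by metis
  then show "Eu a b i v c = 0"
    using assms(1) by (simp add: Eu_def Vsp_vanishes)
qed (use assms in \<open>simp add: Eu_def\<close>)

lemma Vsp_Pswap [simp]: "v \<in> Vsp n L \<Longrightarrow> i \<in> {1..n} \<Longrightarrow> j \<in> {1..n} \<Longrightarrow> Pswap i j v \<in> Vsp n L"
  by (rule VspI) (simp_all add: Pswap_def Vsp_vanishes comp_sw_cols_iff)

lemma Vsp_KV [simp]: "v \<in> Vsp n L \<Longrightarrow> i \<in> {1..n} \<Longrightarrow> j \<in> {1..n} \<Longrightarrow> KV i j v \<in> Vsp n L"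
  by (rule VspI) (simp_all add: KV_def Vsp_vanishes)

lemma Vsp_sK [simp]: "v \<in> Vsp n L \<Longrightarrow> i \<in> {1..<n} \<Longrightarrow> sK i v \<in> Vsp n L"
  unfolding sK_def by (intro Vsp_KV Vsp_Pswap) auto

lemma Vsp_zmul [simp]: "v \<in> Vsp n L \<Longrightarrow> i \<in> {1..n} \<Longrightarrow> zmul i k v \<in> Vsp n L"
  by (rule VspI) (simp_all add: zmul_def Vsp_vanishes)

lemma DD_apply: "DD a b v c = ddiv a b (v (c \<circ> sw a b))"
  by (simp add: DD_def Pswap_def)

lemma Vsp_DD [simp]:
  "v \<in> Vsp n L \<Longrightarrow> a \<in> {1..n} \<Longrightarrow> b \<in> {1..n} \<Longrightarrow> a \<noteq> b \<Longrightarrow> DD a b v \<in> Vsp n L"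
  by (rule VspI) (simp_all add: DD_apply Vsp_vanishes comp_sw_cols_iff)

subsection \<open>The operators on colourings\<close>

(* fgen n a, fgen0 n L and hgen n chi a are f_(L-a), f_0 and h^chi_(L-a) (see bgens_eq);
   f_(L-a) lowers the colour a + 1 to a. *)
definition fgen :: "nat \<Rightarrow> nat \<Rightarrow> vect \<Rightarrow> vect" where
  "fgen n a v = (\<lambda>c. \<Sum>k\<in>{1..n}. Eu a (Suc a) k v c)"

definition fgen0 :: "nat \<Rightarrow> nat \<Rightarrow> vect \<Rightarrow> vect" where
  "fgen0 n L v = (\<lambda>c. \<Sum>k\<in>{1..n}. Zpow k (- 1) * Eu L 1 k v c)"

(* Eigenvalues on the basis vector indexed by c: of h_(L-a), and of (e_aa - e_bb)_k. *)
definition hweight :: "nat \<Rightarrow> (nat \<Rightarrow> nat) \<Rightarrow> nat \<Rightarrow> complex" where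
  "hweight n c a = (\<Sum>k\<in>{1..n}. of_bool (c k = Suc a) - of_bool (c k = a))"

definition local_weight :: "nat \<Rightarrow> nat \<Rightarrow> nat \<Rightarrow> (nat \<Rightarrow> nat) \<Rightarrow> complex" where
  "local_weight a b k c = of_bool (c k = a) - of_bool (c k = b)"

lemma local_weight_mult_Eu: "lconst (local_weight a b k c) * Eu a b k v c = (if a = b then 0 else Eu a b k v c)"
  by (simp add: local_weight_def Eu_def)

definition hgen :: "nat \<Rightarrow> (nat \<Rightarrow> complex) \<Rightarrow> nat \<Rightarrow> vect \<Rightarrow> vect" where
  "hgen n \<chi> a v = (\<lambda>c. lconst (hweight n c a - (\<chi> (Suc a) - \<chi> a)) * v c)"

definition rmat :: "nat \<Rightarrow> nat \<Rightarrow> vect \<Rightarrow> vect" where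
  "rmat i j v = (\<lambda>c. (if c i = c j then lconst (1 / 2) * v c else 0)
                    + (if c i < c j then v (c \<circ> sw i j) else 0))"

definition coupling :: "nat \<Rightarrow> nat \<Rightarrow> vect \<Rightarrow> vect" where
  "coupling n i v = (\<lambda>c. (\<Sum>j\<in>{i<..n}. DD j i v c + rmat i j v c)
                        - (\<Sum>j\<in>{1..<i}. DD i j v c + rmat j i v c))"

definition dunkl_expl :: "complex \<Rightarrow> (nat \<Rightarrow> complex) \<Rightarrow> nat \<Rightarrow> nat \<Rightarrow> nat \<Rightarrow> vect \<Rightarrow> vect" where
  "dunkl_expl \<kappa> \<nu> n L i v = (\<lambda>c. lconst \<kappa> * euler i (v c) + lconst (\<nu> (c i)) * v c
     + lconst (of_nat n / (2 * of_nat L) - 1 / 2) * v c + coupling n i v c)"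

lemma Eu_diag: "Eu a a k v c = (if c k = a then v c else 0)"
  by (auto simp: Eu_def)

lemma f_act_eq_fgen: "b \<in> {1..L-1} \<Longrightarrow> f_act n L b = fgen n (L - b)"
  by (auto simp: f_act_def fgen_def Suc_diff_le)

lemma f_act_0_eq_fgen0: "f_act n L 0 = fgen0 n L"
  by (simp add: fun_eq_iff f_act_def fgen0_def zmul_def)

lemma hchi_act_eq_hgen:
  assumes "b \<in> {1..L-1}"
  shows "hchi_act \<chi> n L b = hgen n \<chi> (L - b)"
proof -
  have L: "L - b + 1 = Suc (L - b)" "L + 1 - b = Suc (L - b)" "Suc L - b = Suc (L - b)"
    using assms by auto
  have "h_act n L b v c = lconst (hweight n c (L - b)) * v c" for v c
    unfolding h_act_def hweight_def L Eu_diag lconst_sum sum_distrib_right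
    by (rule sum.cong) (auto simp: lconst_def single_uminus)
  then show ?thesis
    by (simp add: hchi_act_def hgen_def fun_eq_iff L lconst_diff lconst_def[symmetric] left_diff_distrib)
qed

lemma bgens_eq:
  "bgens \<chi> n L = hgen n \<chi> ` {1..L-1} \<union> fgen n ` {1..L-1} \<union> {fgen0 n L}"
proof -
  have flip: "(\<lambda>b. F (L - b)) ` {1..L-1} = F ` {1..L-1}" for F :: "nat \<Rightarrow> vect \<Rightarrow> vect"
  proof -
    have "(\<lambda>b. L - b) ` {1..L-1} = {1..L-1}"
    proof
      show "{1..L-1} \<subseteq> (\<lambda>b. L - b) ` {1..L-1}"
      proof
        fix x assume "x \<in> {1..L-1}"
        then have "x = L - (L - x)" "L - x \<in> {1..L-1}" by auto
        then show "x \<in> (\<lambda>b. L - b) ` {1..L-1}" by blast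
      qed
    qed auto
    then show ?thesis by (metis image_image)
  qed
  have "{hchi_act \<chi> n L b | b. b \<in> {1..L-1}} = (\<lambda>b. hgen n \<chi> (L - b)) ` {1..L-1}"
    unfolding Setcompr_eq_image by (rule image_cong) (simp_all add: hchi_act_eq_hgen)
  moreover have "{f_act n L b | b. b \<in> {0..L-1}} = (\<lambda>b. fgen n (L - b)) ` {1..L-1} \<union> {fgen0 n L}"
  proof -
    have "{0..L-1} = insert 0 {1..L-1}" by auto
    then have "{f_act n L b | b. b \<in> {0..L-1}} = insert (f_act n L 0) (f_act n L ` {1..L-1})"
      unfolding Setcompr_eq_image by simp
    also have "\<dots> = (\<lambda>b. fgen n (L - b)) ` {1..L-1} \<union> {fgen0 n L}"
      by (simp add: f_act_0_eq_fgen0 f_act_eq_fgen)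
    finally show ?thesis .
  qed
  ultimately show ?thesis
    unfolding bgens_def flip by blast
qed

lemma nuop_on_cols:
  assumes "c \<in> cols n L" "i \<in> {1..n}"
  shows "nuop \<nu> L i v c = lconst (\<nu> (c i)) * v c"
proof -
  have "nuop \<nu> L i v c = (\<Sum>a\<in>{1..L}. if a = c i then lconst (\<nu> a) * v c else 0)"
    unfolding nuop_def Eu_diag by (rule sum.cong) (auto simp: lconst_def)
  then show ?thesis using cols_range[OF assms] by simp
qed

lemma rop_on_cols:
  assumes c: "c \<in> cols n L" and i: "i \<in> {1..n}" and j: "j \<in> {1..n}" and ij: "i \<noteq> j"
  shows "rop L i j v c = rmat i j v c"
proof -
  have ci: "c i \<in> {1..L}" and cj: "c j \<in> {1..L}" using cols_range[OF c] i j by auto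
  have diag: "(\<Sum>a\<in>{1..L}. Eu a a i (Eu a a j v) c) = (if c i = c j then v c else 0)"
  proof -
    have "(\<Sum>a\<in>{1..L}. Eu a a i (Eu a a j v) c)
        = (\<Sum>a\<in>{1..L}. if a = c i then (if c i = c j then v c else 0) else 0)"
      by (rule sum.cong) (auto simp: Eu_diag)
    then show ?thesis using ci by simp
  qed
  have off_diag: "(\<Sum>b\<in>{a<..L}. Eu a b i (Eu b a j v) c) = (if a = c i \<and> c i < c j then v (c \<circ> sw i j) else 0)"
    for a
  proof -
    have "(\<Sum>b\<in>{a<..L}. Eu a b i (Eu b a j v) c)
        = (\<Sum>b\<in>{a<..L}. if b = c j then (if a = c i then v (c \<circ> sw i j) else 0) else 0)"
      by (rule sum.cong) (use ij in \<open>auto simp: Eu_def comp_sw_upd fun_upd_twist\<close>)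
    then show ?thesis using cj by auto
  qed
  show ?thesis
    unfolding rop_def rmat_def diag off_diag using ci by (simp add: lconst_def)
qed

lemma dunkl_on_cols:
  assumes c: "c \<in> cols n L" and i: "i \<in> {1..n}"
  shows "dunkl \<kappa> \<nu> n L i v c = dunkl_expl \<kappa> \<nu> n L i v c"
proof -
  have "(\<Sum>j\<in>{i<..n}. DD j i v c + rop L i j v c) = (\<Sum>j\<in>{i<..n}. DD j i v c + rmat i j v c)"
    "(\<Sum>j\<in>{1..<i}. DD i j v c + rop L j i v c) = (\<Sum>j\<in>{1..<i}. DD i j v c + rmat j i v c)"
    by (rule sum.cong; use c i in \<open>auto simp: rop_on_cols\<close>)+
  then show ?thesis
    unfolding dunkl_def dunkl_expl_def coupling_def nuop_on_cols[OF c i] by (simp add: lconst_def)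
qed

subsection \<open>Commutators of the Dunkl operators with the generators\<close>

lemma fgen_add: "fgen n a (\<lambda>c. x c + y c) c = fgen n a x c + fgen n a y c"
  unfolding fgen_def Eu_def by (auto simp: sum.distrib[symmetric] intro!: sum.cong)

lemma fgen_diff: "fgen n a (\<lambda>c. x c - y c) c = fgen n a x c - fgen n a y c"
  unfolding fgen_def Eu_def by (auto simp: sum_subtractf[symmetric] intro!: sum.cong)

lemma fgen_lconst_mult: "fgen n a (\<lambda>c. lconst s * x c) c = lconst s * fgen n a x c"
  unfolding fgen_def Eu_def by (auto simp: sum_distrib_left intro!: sum.cong)

lemma fgen_sum: "fgen n a (\<lambda>c. \<Sum>j\<in>J. f j c) c = (\<Sum>j\<in>J. fgen n a (f j) c)"
  unfolding fgen_def Eu_def by (subst sum.swap) (auto intro!: sum.cong)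

lemma fgen_comp_sw:
  assumes "i \<in> {1..n}" "j \<in> {1..n}"
  shows "fgen n a v (c \<circ> sw i j) = (\<Sum>k\<in>{1..n}. if c k = a then v (c(k := Suc a) \<circ> sw i j) else 0)"
  unfolding fgen_def sum_reindex_sw[OF assms, of "\<lambda>k. Eu a (Suc a) k v (c \<circ> sw i j)", symmetric]
  by (rule sum.cong) (auto simp: Eu_def upd_comp_sw)

lemma fgen_euler: "lconst \<kappa> * euler i (fgen n a v c) = fgen n a (\<lambda>c. lconst \<kappa> * euler i (v c)) c"
  unfolding fgen_def Eu_def euler_sum sum_distrib_left by (rule sum.cong) auto

lemma fgen_nu:
  assumes "i \<in> {1..n}"
  shows "lconst (\<nu> (c i)) * fgen n a v c = fgen n a (\<lambda>c. lconst (\<nu> (c i)) * v c) c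
           + lconst (\<nu> a - \<nu> (Suc a)) * Eu a (Suc a) i v c"
proof -
  have "(\<Sum>k\<in>{1..n}. lconst (\<nu> (c i)) * Eu a (Suc a) k v c)
      = (\<Sum>k\<in>{1..n}. Eu a (Suc a) k (\<lambda>c. lconst (\<nu> (c i)) * v c) c)
        + (lconst (\<nu> (c i)) * Eu a (Suc a) i v c - Eu a (Suc a) i (\<lambda>c. lconst (\<nu> (c i)) * v c) c)"
    by (rule sum_eq_except_one[OF _ assms]) (auto simp: Eu_def)
  moreover have "lconst (\<nu> (c i)) * Eu a (Suc a) i v c - Eu a (Suc a) i (\<lambda>c. lconst (\<nu> (c i)) * v c) c
      = lconst (\<nu> a - \<nu> (Suc a)) * Eu a (Suc a) i v c"
    by (simp add: Eu_def lconst_diff algebra_simps)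
  ultimately show ?thesis
    unfolding fgen_def sum_distrib_left by simp
qed

lemma fgen_DD:
  assumes v: "v \<in> Vsp n L" and p: "p \<in> {1..n}" and q: "q \<in> {1..n}" and pq: "p \<noteq> q"
  shows "DD p q (fgen n a v) c = fgen n a (DD p q v) c"
  unfolding DD_apply fgen_comp_sw[OF p q]
  by (subst ddiv_sum[OF p q pq]) (auto simp: Vsp_lpolys[OF v] fgen_def Eu_def DD_apply pq intro!: sum.cong)

(* Only the summands k = i and k = j of the lowering operator fail to commute with r_ij. *)
lemma fgen_rmat:
  assumes i: "i \<in> {1..n}" and j: "j \<in> {1..n}" and ij: "i \<noteq> j"
  shows "rmat i j (fgen n a v) c = fgen n a (rmat i j v) c
     + lconst (1 / 2) * (lconst (local_weight a (Suc a) i c) * Eu a (Suc a) j v c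
                        - lconst (local_weight a (Suc a) j c) * Eu a (Suc a) i v c)"
proof -
  define T where "T k = (if c i = c j then lconst (1 / 2) * Eu a (Suc a) k v c else 0)
      + (if c i < c j then (if c k = a then v (c(k := Suc a) \<circ> sw i j) else 0) else 0)" for k
  define S where "S k = Eu a (Suc a) k (rmat i j v) c" for k
  have "rmat i j (fgen n a v) c = sum T {1..n}"
    unfolding rmat_def fgen_comp_sw[OF i j] T_def sum.distrib
    by (simp add: fgen_def sum_distrib_left sum.If_cases)
  also have "\<dots> = sum S {1..n} + ((T i - S i) + (T j - S j))"
    by (rule sum_eq_except_two[OF _ i j ij]) (auto simp: T_def S_def Eu_def rmat_def)
  also have "sum S {1..n} = fgen n a (rmat i j v) c"
    by (simp add: S_def fgen_def)
  also have "(T i - S i) + (T j - S j) = lconst (1 / 2) * (lconst (local_weight a (Suc a) i c) * Eu a (Suc a) j v c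
                        - lconst (local_weight a (Suc a) j c) * Eu a (Suc a) i v c)"
  proof -
    have swap_ij: "c(j := Suc a) \<circ> sw i j = c(i := Suc a)" if "c i = a" "c j = a"
      using that by (auto simp: fun_eq_iff sw_def)
    have swap_i: "c(i := Suc a) \<circ> sw i j = c(i := Suc a)" if "c j = Suc a"
      using that by (auto simp: fun_eq_iff sw_def)
    consider "c i = a" "c j = a" | "c i = a" "c j = Suc a" | "c i = a" "c j \<noteq> a" "c j \<noteq> Suc a"
      | "c i \<noteq> a" "c j = a" "c i = Suc a" | "c i \<noteq> a" "c j = a" "c i \<noteq> Suc a" | "c i \<noteq> a" "c j \<noteq> a"
      by blast
    then show ?thesis
      using ij lconst_half
      by cases (simp_all add: T_def S_def Eu_def rmat_def local_weight_def swap_ij swap_i algebra_simps)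
  qed
  finally show ?thesis .
qed

lemma fgen_local_weight_mult:
  assumes "i \<in> {1..n}"
  shows "fgen n a (\<lambda>c. lconst (local_weight a (Suc a) i c) * v c) c
       = (\<Sum>k\<in>{1..n} - {i}. lconst (local_weight a (Suc a) i c) * Eu a (Suc a) k v c) - Eu a (Suc a) i v c"
proof -
  have "fgen n a (\<lambda>c. lconst (local_weight a (Suc a) i c) * v c) c
      = Eu a (Suc a) i (\<lambda>c. lconst (local_weight a (Suc a) i c) * v c) c
        + (\<Sum>k\<in>{1..n} - {i}. Eu a (Suc a) k (\<lambda>c. lconst (local_weight a (Suc a) i c) * v c) c)"
    unfolding fgen_def by (rule sum.remove[OF _ assms]) simp
  also have "(\<Sum>k\<in>{1..n} - {i}. Eu a (Suc a) k (\<lambda>c. lconst (local_weight a (Suc a) i c) * v c) c)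
      = (\<Sum>k\<in>{1..n} - {i}. lconst (local_weight a (Suc a) i c) * Eu a (Suc a) k v c)"
    by (rule sum.cong) (auto simp: Eu_def local_weight_def)
  finally show ?thesis by (simp add: Eu_def local_weight_def)
qed

lemma hweight_split:
  assumes "i \<in> {1..n}"
  shows "hweight n c a = - local_weight a (Suc a) i c - (\<Sum>k\<in>{1..n} - {i}. local_weight a (Suc a) k c)"
proof -
  have "hweight n c a = - (\<Sum>k\<in>{1..n}. local_weight a (Suc a) k c)"
    unfolding hweight_def local_weight_def sum_negf[symmetric] by simp
  then show ?thesis using sum.remove[OF _ assms, of "\<lambda>k. local_weight a (Suc a) k c"] by simp
qed

lemma coupling_fgen:
  assumes v: "v \<in> Vsp n L" and i: "i \<in> {1..n}"
  shows "coupling n i (fgen n a v) c = fgen n a (coupling n i v) c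
     + lconst (1 / 2) * (\<Sum>j\<in>{1..n} - {i}. lconst (local_weight a (Suc a) i c) * Eu a (Suc a) j v c
                                         - lconst (local_weight a (Suc a) j c) * Eu a (Suc a) i v c)"
proof -
  define R where "R p q = lconst (1 / 2) * (lconst (local_weight a (Suc a) p c) * Eu a (Suc a) q v c
                                          - lconst (local_weight a (Suc a) q c) * Eu a (Suc a) p v c)" for p q
  have upper: "(\<Sum>j\<in>{i<..n}. DD j i (fgen n a v) c + rmat i j (fgen n a v) c)
      = (\<Sum>j\<in>{i<..n}. fgen n a (DD j i v) c + fgen n a (rmat i j v) c) + (\<Sum>j\<in>{i<..n}. R i j)"
    unfolding sum.distrib[symmetric] using i
    by (intro sum.cong) (auto simp: fgen_DD[OF v] fgen_rmat R_def)
  have lower: "(\<Sum>j\<in>{1..<i}. DD i j (fgen n a v) c + rmat j i (fgen n a v) c)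
      = (\<Sum>j\<in>{1..<i}. fgen n a (DD i j v) c + fgen n a (rmat j i v) c) - (\<Sum>j\<in>{1..<i}. R i j)"
    unfolding sum_subtractf[symmetric] using i
    by (intro sum.cong) (auto simp: fgen_DD[OF v] fgen_rmat R_def algebra_simps)
  have "fgen n a (coupling n i v) c
      = (\<Sum>j\<in>{i<..n}. fgen n a (DD j i v) c + fgen n a (rmat i j v) c)
        - (\<Sum>j\<in>{1..<i}. fgen n a (DD i j v) c + fgen n a (rmat j i v) c)"
    by (simp add: coupling_def fgen_diff fgen_sum fgen_add)
  moreover have "(\<Sum>j\<in>{1..n} - {i}. R i j) = (\<Sum>j\<in>{i<..n}. R i j) + (\<Sum>j\<in>{1..<i}. R i j)"
    by (rule sum_split_at[OF i])
  ultimately show ?thesis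
    unfolding coupling_def upper lower by (simp add: R_def sum_distrib_left)
qed

(* nu a - nu (a + 1) = -1 - (chi (a + 1) - chi a)/2 is what turns the diagonal terms into h^chi_(L-a). *)
lemma fgen_dunkl_correction:
  assumes i: "i \<in> {1..n}" and \<nu>: "\<And>x. \<nu> x = of_nat x + \<chi> x / 2"
  shows "lconst (\<nu> a - \<nu> (Suc a)) * Eu a (Suc a) i v c
       + lconst (1 / 2) * (\<Sum>j\<in>{1..n} - {i}. lconst (local_weight a (Suc a) i c) * Eu a (Suc a) j v c
                                         - lconst (local_weight a (Suc a) j c) * Eu a (Suc a) i v c)
     = lconst (1 / 2) * fgen n a (\<lambda>c. lconst (local_weight a (Suc a) i c) * v c) c
       + lconst (1 / 2) * hgen n \<chi> a (Eu a (Suc a) i v) c"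
proof -
  define E where "E k = Eu a (Suc a) k v c" for k
  define w where "w k = local_weight a (Suc a) k c" for k
  define S where "S = (\<Sum>j\<in>{1..n} - {i}. lconst (w i) * E j)"
  define W where "W = lconst (\<Sum>k\<in>{1..n} - {i}. w k)"
  define h where "h = lconst (1 / 2)"
  define X where "X = lconst (\<chi> (Suc a) - \<chi> a)"
  have nu_diff: "lconst (\<nu> a - \<nu> (Suc a)) = - 1 - h * X"
  proof -
    have "\<nu> a - \<nu> (Suc a) = - 1 - 1 / 2 * (\<chi> (Suc a) - \<chi> a)" by (simp add: \<nu> algebra_simps)
    then show ?thesis by (simp only: h_def X_def lconst_diff lconst_mult lconst_minus_1)
  qed
  have "lconst (\<nu> a - \<nu> (Suc a)) * E i + h * (\<Sum>j\<in>{1..n} - {i}. lconst (w i) * E j - lconst (w j) * E i)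
      = (- 1 - h * X) * E i + h * (S - W * E i)"
    unfolding nu_diff S_def W_def by (simp add: sum_subtractf lconst_sum sum_distrib_right)
  also have "\<dots> = h * (S - E i) + h * ((- lconst (w i) - W - X) * E i)"
  proof -
    have "h * (S - E i) + h * ((- lconst (w i) - W - X) * E i)
        = (- (2 * h) - h * X) * E i + h * (S - W * E i) + h * (E i - lconst (w i) * E i)"
      by (simp add: algebra_simps)
    moreover have "lconst (w i) * E i = E i"
      by (simp add: w_def E_def local_weight_mult_Eu)
    ultimately show ?thesis using lconst_half[folded h_def] by simp
  qed
  also have "\<dots> = h * fgen n a (\<lambda>c. lconst (local_weight a (Suc a) i c) * v c) c
      + h * hgen n \<chi> a (Eu a (Suc a) i v) c"
    by (simp add: fgen_local_weight_mult[OF i] hgen_def hweight_split[OF i] S_def W_def X_def E_def w_def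
        lconst_diff lconst_uminus)
  finally show ?thesis by (simp add: E_def w_def h_def)
qed

lemma dunkl_expl_fgen:
  assumes v: "v \<in> Vsp n L" and i: "i \<in> {1..n}" and \<nu>: "\<And>x. \<nu> x = of_nat x + \<chi> x / 2"
  shows "dunkl_expl \<kappa> \<nu> n L i (fgen n a v) c
       = fgen n a (\<lambda>c. dunkl_expl \<kappa> \<nu> n L i v c + lconst (1 / 2) * (lconst (local_weight a (Suc a) i c) * v c)) c
         + lconst (1 / 2) * hgen n \<chi> a (Eu a (Suc a) i v) c"
proof -
  have "dunkl_expl \<kappa> \<nu> n L i (fgen n a v) c
      = fgen n a (dunkl_expl \<kappa> \<nu> n L i v) c
        + (lconst (\<nu> a - \<nu> (Suc a)) * Eu a (Suc a) i v c
           + lconst (1 / 2) * (\<Sum>j\<in>{1..n} - {i}. lconst (local_weight a (Suc a) i c) * Eu a (Suc a) j v c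
                                             - lconst (local_weight a (Suc a) j c) * Eu a (Suc a) i v c))"
    unfolding dunkl_expl_def fgen_euler fgen_nu[OF i] coupling_fgen[OF v i] fgen_add fgen_lconst_mult
    by (simp add: algebra_simps)
  then show ?thesis
    unfolding fgen_dunkl_correction[OF i \<nu>] fgen_add fgen_lconst_mult by (simp add: algebra_simps)
qed

lemma fgen0_add: "fgen0 n L (\<lambda>c. x c + y c) c = fgen0 n L x c + fgen0 n L y c"
  unfolding fgen0_def Eu_def by (auto simp: sum.distrib[symmetric] algebra_simps intro!: sum.cong)

lemma fgen0_diff: "fgen0 n L (\<lambda>c. x c - y c) c = fgen0 n L x c - fgen0 n L y c"
  unfolding fgen0_def Eu_def by (auto simp: sum_subtractf[symmetric] algebra_simps intro!: sum.cong)

lemma fgen0_lconst_mult: "fgen0 n L (\<lambda>c. lconst s * x c) c = lconst s * fgen0 n L x c"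
  unfolding fgen0_def Eu_def by (auto simp: sum_distrib_left algebra_simps intro!: sum.cong)

lemma fgen0_sum: "fgen0 n L (\<lambda>c. \<Sum>j\<in>J. f j c) c = (\<Sum>j\<in>J. fgen0 n L (f j) c)"
  unfolding fgen0_def Eu_def by (subst sum.swap) (auto simp: sum_distrib_left intro!: sum.cong)

lemma fgen0_comp_sw:
  assumes "i \<in> {1..n}" "j \<in> {1..n}"
  shows "fgen0 n L v (c \<circ> sw i j)
       = (\<Sum>k\<in>{1..n}. Zpow (sw i j k) (- 1) * (if c k = L then v (c(k := 1) \<circ> sw i j) else 0))"
  unfolding fgen0_def
    sum_reindex_sw[OF assms, of "\<lambda>k. Zpow k (- 1) * Eu L 1 k v (c \<circ> sw i j)", symmetric]
  by (rule sum.cong) (auto simp: Eu_def upd_comp_sw)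

lemma fgen0_euler:
  assumes "i \<in> {1..n}"
  shows "lconst \<kappa> * euler i (fgen0 n L v c)
       = fgen0 n L (\<lambda>c. lconst \<kappa> * euler i (v c)) c - lconst \<kappa> * (Zpow i (- 1) * Eu L 1 i v c)"
proof -
  have "(\<Sum>k\<in>{1..n}. lconst \<kappa> * euler i (Zpow k (- 1) * Eu L 1 k v c))
      = (\<Sum>k\<in>{1..n}. Zpow k (- 1) * Eu L 1 k (\<lambda>c. lconst \<kappa> * euler i (v c)) c)
        + (lconst \<kappa> * euler i (Zpow i (- 1) * Eu L 1 i v c) - Zpow i (- 1) * Eu L 1 i (\<lambda>c. lconst \<kappa> * euler i (v c)) c)"
    by (rule sum_eq_except_one[OF _ assms])
       (auto simp: Eu_def euler_Zpow_mult euler_lconst_mult algebra_simps)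
  moreover have "lconst \<kappa> * euler i (Zpow i (- 1) * Eu L 1 i v c) - Zpow i (- 1) * Eu L 1 i (\<lambda>c. lconst \<kappa> * euler i (v c)) c
      = - (lconst \<kappa> * (Zpow i (- 1) * Eu L 1 i v c))"
    by (simp add: Eu_def euler_Zpow_mult lconst_def[symmetric] algebra_simps)
  ultimately show ?thesis
    unfolding fgen0_def euler_sum sum_distrib_left by simp
qed

lemma fgen0_nu:
  assumes "i \<in> {1..n}"
  shows "lconst (\<nu> (c i)) * fgen0 n L v c = fgen0 n L (\<lambda>c. lconst (\<nu> (c i)) * v c) c
           + lconst (\<nu> L - \<nu> 1) * (Zpow i (- 1) * Eu L 1 i v c)"
proof -
  have "(\<Sum>k\<in>{1..n}. lconst (\<nu> (c i)) * (Zpow k (- 1) * Eu L 1 k v c))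
      = (\<Sum>k\<in>{1..n}. Zpow k (- 1) * Eu L 1 k (\<lambda>c. lconst (\<nu> (c i)) * v c) c)
        + (lconst (\<nu> (c i)) * (Zpow i (- 1) * Eu L 1 i v c) - Zpow i (- 1) * Eu L 1 i (\<lambda>c. lconst (\<nu> (c i)) * v c) c)"
    by (rule sum_eq_except_one[OF _ assms]) (auto simp: Eu_def algebra_simps)
  moreover have "lconst (\<nu> (c i)) * (Zpow i (- 1) * Eu L 1 i v c) - Zpow i (- 1) * Eu L 1 i (\<lambda>c. lconst (\<nu> (c i)) * v c) c
      = lconst (\<nu> L - \<nu> 1) * (Zpow i (- 1) * Eu L 1 i v c)"
    by (simp add: Eu_def lconst_diff algebra_simps)
  ultimately show ?thesis
    unfolding fgen0_def sum_distrib_left by simp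
qed

lemma fgen0_DD:
  assumes v: "v \<in> Vsp n L" and p: "p \<in> {1..n}" and q: "q \<in> {1..n}" and pq: "p \<noteq> q"
  shows "DD p q (fgen0 n L v) c = fgen0 n L (DD p q v) c
           + Zpow q (- 1) * (Eu L 1 q (Pswap p q v) c - Eu L 1 p (Pswap p q v) c)"
proof -
  define u where "u k = (if c k = L then v (c(k := 1) \<circ> sw p q) else 0)" for k
  have u: "u k \<in> lpolys n" for k by (simp add: u_def Vsp_lpolys[OF v])
  have "DD p q (fgen0 n L v) c = (\<Sum>k\<in>{1..n}. ddiv p q (Zpow (sw p q k) (- 1) * u k))"
    unfolding DD_apply fgen0_comp_sw[OF p q] u_def[symmetric]
    using sw_in_iff[OF p q] u by (intro ddiv_sum[OF p q pq]) simp
  also have "\<dots> = (\<Sum>k\<in>{1..n}. Zpow k (- 1) * ddiv p q (u k))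
      + (Zpow q (- 1) * u q - Zpow q (- 1) * u p)"
    using p q pq by (simp add: ddiv_Zpow_minus_1_mult[OF p q pq u] sum.distrib sum_subtractf
        if_distrib[of "\<lambda>x. x * _"] sum.If_cases Int_absorb1 Int_insert_right)
  also have "(\<Sum>k\<in>{1..n}. Zpow k (- 1) * ddiv p q (u k)) = fgen0 n L (DD p q v) c"
    unfolding fgen0_def by (rule sum.cong) (auto simp: u_def Eu_def DD_apply pq)
  finally show ?thesis
    by (simp add: u_def Eu_def Pswap_def right_diff_distrib)
qed

lemma fgen0_rmat:
  assumes i: "i \<in> {1..n}" and j: "j \<in> {1..n}" and ij: "i \<noteq> j" and c: "c \<in> cols n L" and L: "2 \<le> L"
  shows "rmat i j (fgen0 n L v) c = fgen0 n L (rmat i j v) c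
     + Zpow i (- 1) * (Eu L 1 j (Pswap i j v) c - Eu L 1 i (Pswap i j v) c)
     + lconst (1 / 2) * (Zpow j (- 1) * (lconst (local_weight L 1 i c) * Eu L 1 j v c)
                        - Zpow i (- 1) * (lconst (local_weight L 1 j c) * Eu L 1 i v c))"
proof -
  define T where "T k = (if c i = c j then lconst (1 / 2) * (Zpow k (- 1) * Eu L 1 k v c) else 0)
      + (if c i < c j then Zpow (sw i j k) (- 1) * (if c k = L then v (c(k := 1) \<circ> sw i j) else 0) else 0)" for k
  define S where "S k = Zpow k (- 1) * Eu L 1 k (rmat i j v) c" for k
  have "rmat i j (fgen0 n L v) c = sum T {1..n}"
    unfolding rmat_def fgen0_comp_sw[OF i j] T_def sum.distrib
    by (simp add: fgen0_def sum_distrib_left sum.If_cases)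
  also have "\<dots> = sum S {1..n} + ((T i - S i) + (T j - S j))"
    by (rule sum_eq_except_two[OF _ i j ij])
       (auto simp: T_def S_def Eu_def rmat_def upd_comp_sw sw_def)
  also have "sum S {1..n} = fgen0 n L (rmat i j v) c"
    by (simp add: S_def fgen0_def)
  also have "(T i - S i) + (T j - S j)
      = Zpow i (- 1) * (Eu L 1 j (Pswap i j v) c - Eu L 1 i (Pswap i j v) c)
        + lconst (1 / 2) * (Zpow j (- 1) * (lconst (local_weight L 1 i c) * Eu L 1 j v c)
                           - Zpow i (- 1) * (lconst (local_weight L 1 j c) * Eu L 1 i v c))"
  proof -
    have ci: "c i \<in> {1..L}" and cj: "c j \<in> {1..L}" using cols_range[OF c] i j by auto
    have swap_ij: "c(j := Suc 0) \<circ> sw i j = c(i := Suc 0)" if "c i = L" "c j = L"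
      using that by (auto simp: fun_eq_iff sw_def)
    have swap_i: "c(i := Suc 0) \<circ> sw i j = c(i := Suc 0)" if "c j = Suc 0"
      using that by (auto simp: fun_eq_iff sw_def)
    have sw_ij: "sw i j i = j" "sw i j j = i" by (simp_all add: sw_def)
    have half: "2 * (lconst (1 / 2) * x) = x" for x
      using lconst_half by (simp add: mult.assoc[symmetric])
    consider "c i = L" "c j = L" | "c i = L" "c j = 1" | "c i = L" "c j \<noteq> L" "c j \<noteq> 1"
      | "c i \<noteq> L" "c j = L" "c i = 1" | "c i \<noteq> L" "c j = L" "c i \<noteq> 1" | "c i \<noteq> L" "c j \<noteq> L"
      by blast
    then show ?thesis
      using ij L ci cj lconst_half
      by cases (simp_all add: T_def S_def Eu_def rmat_def local_weight_def Pswap_def sw_ij swap_ij swap_i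
          half algebra_simps)
  qed
  finally show ?thesis by (simp add: add.assoc)
qed

lemma fgen0_local_weight_mult:
  assumes i: "i \<in> {1..n}" and L: "2 \<le> L"
  shows "fgen0 n L (\<lambda>c. lconst (local_weight L 1 i c) * v c) c
       = (\<Sum>k\<in>{1..n} - {i}. lconst (local_weight L 1 i c) * (Zpow k (- 1) * Eu L 1 k v c))
         - Zpow i (- 1) * Eu L 1 i v c"
proof -
  have "fgen0 n L (\<lambda>c. lconst (local_weight L 1 i c) * v c) c
      = Zpow i (- 1) * Eu L 1 i (\<lambda>c. lconst (local_weight L 1 i c) * v c) c
        + (\<Sum>k\<in>{1..n} - {i}. Zpow k (- 1) * Eu L 1 k (\<lambda>c. lconst (local_weight L 1 i c) * v c) c)"
    unfolding fgen0_def by (rule sum.remove[OF _ i]) simp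
  also have "(\<Sum>k\<in>{1..n} - {i}. Zpow k (- 1) * Eu L 1 k (\<lambda>c. lconst (local_weight L 1 i c) * v c) c)
      = (\<Sum>k\<in>{1..n} - {i}. lconst (local_weight L 1 i c) * (Zpow k (- 1) * Eu L 1 k v c))"
    by (rule sum.cong) (auto simp: Eu_def local_weight_def)
  finally show ?thesis using L by (simp add: Eu_def local_weight_def)
qed

lemma hweight_telescope:
  assumes "1 \<le> L"
  shows "(\<Sum>a\<in>{1..L-1}. hweight n c a) = (\<Sum>k\<in>{1..n}. local_weight L 1 k c)"
proof -
  have "(\<Sum>a\<in>{1..L-1}. of_bool (c k = Suc a) - of_bool (c k = a)) = (local_weight L 1 k c :: complex)" for k
    using sum_Suc_diff[of 1 "L - 1" "\<lambda>a. of_bool (c k = a) :: complex"] assms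
    by (simp add: local_weight_def)
  then show ?thesis
    unfolding hweight_def by (subst sum.swap) simp
qed

lemma hgen_sum:
  assumes "1 \<le> L"
  shows "(\<Sum>a\<in>{1..L-1}. hgen n \<chi> a w c) = lconst ((\<Sum>k\<in>{1..n}. local_weight L 1 k c) - (\<chi> L - \<chi> 1)) * w c"
proof -
  have "(\<Sum>a\<in>{1..L-1}. \<chi> (Suc a) - \<chi> a) = \<chi> L - \<chi> 1"
    using sum_Suc_diff[of 1 "L - 1" \<chi>] assms by simp
  then show ?thesis
    unfolding hgen_def sum_distrib_right[symmetric] lconst_sum[symmetric] sum_subtractf hweight_telescope[OF assms]
    by simp
qed

lemma Pswap_commute: "Pswap j i = Pswap i j"
  by (simp add: Pswap_def sw_commute fun_eq_iff)

(* The z^(-1)-corrections produced by DD (fgen0_DD) and by rmat (fgen0_rmat) cancel. *)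
lemma coupling_fgen0:
  assumes v: "v \<in> Vsp n L" and i: "i \<in> {1..n}" and c: "c \<in> cols n L" and L: "2 \<le> L"
  shows "coupling n i (fgen0 n L v) c = fgen0 n L (coupling n i v) c
     + lconst (1 / 2) * (\<Sum>j\<in>{1..n} - {i}. Zpow j (- 1) * (lconst (local_weight L 1 i c) * Eu L 1 j v c)
                                         - Zpow i (- 1) * (lconst (local_weight L 1 j c) * Eu L 1 i v c))"
proof -
  define Q where "Q p q = lconst (1 / 2) * (Zpow q (- 1) * (lconst (local_weight L 1 p c) * Eu L 1 q v c)
                                          - Zpow p (- 1) * (lconst (local_weight L 1 q c) * Eu L 1 p v c))" for p q
  have upper: "(\<Sum>j\<in>{i<..n}. DD j i (fgen0 n L v) c + rmat i j (fgen0 n L v) c)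
      = (\<Sum>j\<in>{i<..n}. fgen0 n L (DD j i v) c + fgen0 n L (rmat i j v) c) + (\<Sum>j\<in>{i<..n}. Q i j)"
    unfolding sum.distrib[symmetric] using i
    by (intro sum.cong) (auto simp: fgen0_DD[OF v] fgen0_rmat[OF _ _ _ c L] Q_def Pswap_commute[of _ i] algebra_simps)
  have lower: "(\<Sum>j\<in>{1..<i}. DD i j (fgen0 n L v) c + rmat j i (fgen0 n L v) c)
      = (\<Sum>j\<in>{1..<i}. fgen0 n L (DD i j v) c + fgen0 n L (rmat j i v) c) - (\<Sum>j\<in>{1..<i}. Q i j)"
    unfolding sum_subtractf[symmetric] using i
    by (intro sum.cong) (auto simp: fgen0_DD[OF v] fgen0_rmat[OF _ _ _ c L] Q_def Pswap_commute[of i] algebra_simps)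
  have "fgen0 n L (coupling n i v) c
      = (\<Sum>j\<in>{i<..n}. fgen0 n L (DD j i v) c + fgen0 n L (rmat i j v) c)
        - (\<Sum>j\<in>{1..<i}. fgen0 n L (DD i j v) c + fgen0 n L (rmat j i v) c)"
    by (simp add: coupling_def fgen0_diff fgen0_sum fgen0_add)
  moreover have "(\<Sum>j\<in>{1..n} - {i}. Q i j) = (\<Sum>j\<in>{i<..n}. Q i j) + (\<Sum>j\<in>{1..<i}. Q i j)"
    by (rule sum_split_at[OF i])
  ultimately show ?thesis
    unfolding coupling_def upper lower by (simp add: Q_def sum_distrib_left)
qed

(* kappa = L cancels the L in nu L - nu 1 = L - 1 + (chi L - chi 1)/2. *)
lemma fgen0_dunkl_correction:
  assumes i: "i \<in> {1..n}" and L: "2 \<le> L"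
    and \<nu>: "\<And>x. \<nu> x = of_nat x + \<chi> x / 2" and \<kappa>: "\<kappa> = of_nat L"
  shows "- (lconst \<kappa> * (Zpow i (- 1) * Eu L 1 i v c)) + lconst (\<nu> L - \<nu> 1) * (Zpow i (- 1) * Eu L 1 i v c)
       + lconst (1 / 2) * (\<Sum>j\<in>{1..n} - {i}. Zpow j (- 1) * (lconst (local_weight L 1 i c) * Eu L 1 j v c)
                                         - Zpow i (- 1) * (lconst (local_weight L 1 j c) * Eu L 1 i v c))
     = lconst (1 / 2) * fgen0 n L (\<lambda>c. lconst (local_weight L 1 i c) * v c) c
       - lconst (1 / 2) * (\<Sum>a\<in>{1..L-1}. hgen n \<chi> a (\<lambda>c. Zpow i (- 1) * Eu L 1 i v c) c)"
proof -
  define E where "E k = Zpow k (- 1) * Eu L 1 k v c" for k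
  define g where "g k = local_weight L 1 k c" for k
  define S where "S = (\<Sum>j\<in>{1..n} - {i}. lconst (g i) * E j)"
  define G where "G = lconst (\<Sum>k\<in>{1..n} - {i}. g k)"
  define h where "h = lconst (1 / 2)"
  define X where "X = lconst (\<chi> L - \<chi> 1)"
  have shift: "- lconst \<kappa> + lconst (\<nu> L - \<nu> 1) = - 1 + h * X"
  proof -
    have "- \<kappa> + (\<nu> L - \<nu> 1) = - 1 + 1 / 2 * (\<chi> L - \<chi> 1)" by (simp add: \<nu> \<kappa> algebra_simps)
    then show ?thesis
      by (metis h_def X_def lconst_add lconst_mult lconst_uminus lconst_minus_1)
  qed
  have hgen_E: "(\<Sum>a\<in>{1..L-1}. hgen n \<chi> a (\<lambda>c. Zpow i (- 1) * Eu L 1 i v c) c)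
      = (lconst (g i) + G - X) * E i"
  proof -
    have "(\<Sum>a\<in>{1..L-1}. hgen n \<chi> a (\<lambda>c. Zpow i (- 1) * Eu L 1 i v c) c)
        = lconst ((\<Sum>k\<in>{1..n}. g k) - (\<chi> L - \<chi> 1)) * E i"
      unfolding g_def E_def by (rule hgen_sum) (use L in simp)
    also have "(\<Sum>k\<in>{1..n}. g k) = g i + (\<Sum>k\<in>{1..n} - {i}. g k)"
      by (rule sum.remove[OF _ i]) simp
    finally show ?thesis by (simp add: G_def X_def lconst_add lconst_diff)
  qed
  have "- (lconst \<kappa> * E i) + lconst (\<nu> L - \<nu> 1) * E i
        + h * (\<Sum>j\<in>{1..n} - {i}. Zpow j (- 1) * (lconst (g i) * Eu L 1 j v c) - Zpow i (- 1) * (lconst (g j) * Eu L 1 i v c))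
      = (- 1 + h * X) * E i + h * (S - G * E i)"
    unfolding shift[symmetric] S_def G_def
    by (simp add: E_def sum_subtractf lconst_sum sum_distrib_left sum_distrib_right algebra_simps)
  also have "\<dots> = h * (S - E i) - h * ((lconst (g i) + G - X) * E i)"
  proof -
    have "h * (S - E i) - h * ((lconst (g i) + G - X) * E i)
        = (- (2 * h) + h * X) * E i + h * (S - G * E i) + h * (E i - lconst (g i) * E i)"
      by (simp add: algebra_simps)
    moreover have "lconst (g i) * E i = E i"
      using L by (simp add: g_def E_def local_weight_def Eu_def)
    ultimately show ?thesis using lconst_half[folded h_def] by simp
  qed
  also have "\<dots> = h * fgen0 n L (\<lambda>c. lconst (local_weight L 1 i c) * v c) c
      - h * (\<Sum>a\<in>{1..L-1}. hgen n \<chi> a (\<lambda>c. Zpow i (- 1) * Eu L 1 i v c) c)"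
    unfolding hgen_E fgen0_local_weight_mult[OF i L] S_def E_def g_def ..
  finally show ?thesis by (simp add: E_def g_def h_def)
qed

lemma dunkl_expl_fgen0:
  assumes v: "v \<in> Vsp n L" and i: "i \<in> {1..n}" and c: "c \<in> cols n L" and L: "2 \<le> L"
    and \<nu>: "\<And>x. \<nu> x = of_nat x + \<chi> x / 2" and \<kappa>: "\<kappa> = of_nat L"
  shows "dunkl_expl \<kappa> \<nu> n L i (fgen0 n L v) c
       = fgen0 n L (\<lambda>c. dunkl_expl \<kappa> \<nu> n L i v c + lconst (1 / 2) * (lconst (local_weight L 1 i c) * v c)) c
         - lconst (1 / 2) * (\<Sum>a\<in>{1..L-1}. hgen n \<chi> a (\<lambda>c. Zpow i (- 1) * Eu L 1 i v c) c)"
proof -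
  have "dunkl_expl \<kappa> \<nu> n L i (fgen0 n L v) c
      = fgen0 n L (dunkl_expl \<kappa> \<nu> n L i v) c
        + (- (lconst \<kappa> * (Zpow i (- 1) * Eu L 1 i v c)) + lconst (\<nu> L - \<nu> 1) * (Zpow i (- 1) * Eu L 1 i v c)
           + lconst (1 / 2) * (\<Sum>j\<in>{1..n} - {i}. Zpow j (- 1) * (lconst (local_weight L 1 i c) * Eu L 1 j v c)
                                             - Zpow i (- 1) * (lconst (local_weight L 1 j c) * Eu L 1 i v c)))"
    unfolding dunkl_expl_def fgen0_euler[OF i] fgen0_nu[OF i] coupling_fgen0[OF v i c L] fgen0_add fgen0_lconst_mult
    by (simp add: algebra_simps)
  then show ?thesis
    unfolding fgen0_dunkl_correction[OF i L \<nu> \<kappa>] fgen0_add fgen0_lconst_mult by (simp add: algebra_simps)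
qed

lemma coupling_add:
  assumes v: "v \<in> Vsp n L" and w: "w \<in> Vsp n L" and i: "i \<in> {1..n}"
  shows "coupling n i (\<lambda>c. v c + w c) c = coupling n i v c + coupling n i w c"
proof -
  have "DD p q (\<lambda>c. v c + w c) c = DD p q v c + DD p q w c" if "p \<in> {1..n}" "q \<in> {1..n}" "p \<noteq> q" for p q
    unfolding DD_apply by (rule ddiv_add[OF that Vsp_lpolys[OF v] Vsp_lpolys[OF w]])
  then have "(\<Sum>j\<in>{i<..n}. DD j i (\<lambda>c. v c + w c) c + rmat i j (\<lambda>c. v c + w c) c)
        = (\<Sum>j\<in>{i<..n}. DD j i v c + rmat i j v c) + (\<Sum>j\<in>{i<..n}. DD j i w c + rmat i j w c)"
    "(\<Sum>j\<in>{1..<i}. DD i j (\<lambda>c. v c + w c) c + rmat j i (\<lambda>c. v c + w c) c)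
        = (\<Sum>j\<in>{1..<i}. DD i j v c + rmat j i v c) + (\<Sum>j\<in>{1..<i}. DD i j w c + rmat j i w c)"
    using i unfolding sum.distrib[symmetric] by (auto simp: rmat_def algebra_simps intro!: sum.cong)
  then show ?thesis by (simp add: coupling_def)
qed

lemma coupling_scalar_mult:
  assumes v: "v \<in> Vsp n L" and i: "i \<in> {1..n}"
    and s: "\<And>c p q. p \<in> {1..n} \<Longrightarrow> q \<in> {1..n} \<Longrightarrow> s (c \<circ> sw p q) = s c"
  shows "coupling n i (\<lambda>c. lconst (s c) * v c) c = lconst (s c) * coupling n i v c"
proof -
  have "DD p q (\<lambda>c. lconst (s c) * v c) c = lconst (s c) * DD p q v c"
    if "p \<in> {1..n}" "q \<in> {1..n}" "p \<noteq> q" for p q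
    unfolding DD_apply s[OF that(1,2)] by (rule ddiv_lconst_mult[OF that Vsp_lpolys[OF v]])
  moreover have "rmat p q (\<lambda>c. lconst (s c) * v c) c = lconst (s c) * rmat p q v c"
    if "p \<in> {1..n}" "q \<in> {1..n}" for p q
    using that by (simp add: rmat_def s algebra_simps)
  ultimately have "(\<Sum>j\<in>{i<..n}. DD j i (\<lambda>c. lconst (s c) * v c) c + rmat i j (\<lambda>c. lconst (s c) * v c) c)
        = lconst (s c) * (\<Sum>j\<in>{i<..n}. DD j i v c + rmat i j v c)"
    "(\<Sum>j\<in>{1..<i}. DD i j (\<lambda>c. lconst (s c) * v c) c + rmat j i (\<lambda>c. lconst (s c) * v c) c)
        = lconst (s c) * (\<Sum>j\<in>{1..<i}. DD i j v c + rmat j i v c)"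
    using i unfolding sum_distrib_left by (auto simp: distrib_left intro!: sum.cong)
  then show ?thesis by (simp add: coupling_def right_diff_distrib)
qed

lemma dunkl_expl_add:
  assumes "v \<in> Vsp n L" "w \<in> Vsp n L" "i \<in> {1..n}"
  shows "dunkl_expl \<kappa> \<nu> n L i (\<lambda>c. v c + w c) c = dunkl_expl \<kappa> \<nu> n L i v c + dunkl_expl \<kappa> \<nu> n L i w c"
  by (simp add: dunkl_expl_def coupling_add[OF assms] euler_add algebra_simps)

lemma dunkl_expl_scalar_mult:
  assumes "v \<in> Vsp n L" "i \<in> {1..n}"
    and "\<And>c p q. p \<in> {1..n} \<Longrightarrow> q \<in> {1..n} \<Longrightarrow> s (c \<circ> sw p q) = s c"
  shows "dunkl_expl \<kappa> \<nu> n L i (\<lambda>c. lconst (s c) * v c) c = lconst (s c) * dunkl_expl \<kappa> \<nu> n L i v c"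
  using coupling_scalar_mult[OF assms] euler_lconst_mult[of i "s c" "v c"]
  by (simp add: dunkl_expl_def algebra_simps)

lemma hweight_comp_sw: "p \<in> {1..n} \<Longrightarrow> q \<in> {1..n} \<Longrightarrow> hweight n (c \<circ> sw p q) a = hweight n c a"
  unfolding hweight_def o_def
  by (rule sum_reindex_sw[of p _ q "\<lambda>k. of_bool (c k = Suc a) - of_bool (c k = a)"])

lemma dunkl_expl_hgen:
  assumes "v \<in> Vsp n L" "i \<in> {1..n}"
  shows "dunkl_expl \<kappa> \<nu> n L i (hgen n \<chi> a v) c = hgen n \<chi> a (dunkl_expl \<kappa> \<nu> n L i v) c"
  unfolding hgen_def by (rule dunkl_expl_scalar_mult[OF assms]) (simp add: hweight_comp_sw)

subsection \<open>The subspace U'(b^chi) V\<close>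

lemma Vsp_fgen [simp]: "v \<in> Vsp n L \<Longrightarrow> a \<in> {1..L-1} \<Longrightarrow> fgen n a v \<in> Vsp n L"
  unfolding fgen_def by (rule Vsp_sum) auto

lemma Vsp_fgen0 [simp]: "v \<in> Vsp n L \<Longrightarrow> 1 \<le> L \<Longrightarrow> fgen0 n L v \<in> Vsp n L"
  unfolding fgen0_def by (rule Vsp_sum, rule Vsp_mult) auto

lemma Vsp_hgen [simp]: "v \<in> Vsp n L \<Longrightarrow> hgen n \<chi> a v \<in> Vsp n L"
  unfolding hgen_def by (rule Vsp_mult) simp_all

lemma Vsp_bgens: "1 \<le> L \<Longrightarrow> g \<in> bgens \<chi> n L \<Longrightarrow> v \<in> Vsp n L \<Longrightarrow> g v \<in> Vsp n L"
  unfolding bgens_eq by auto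

lemma UbV_subset_Vsp:
  assumes "1 \<le> L"
  shows "w \<in> UbV \<chi> n L \<Longrightarrow> w \<in> Vsp n L"
  by (induction rule: UbV.induct) (auto simp: Vsp_bgens[OF assms])

lemma Vsp_dunkl [simp]:
  assumes v: "v \<in> Vsp n L" and i: "i \<in> {1..n}"
  shows "dunkl \<kappa> \<nu> n L i v \<in> Vsp n L"
proof -
  have "rop L p q v \<in> Vsp n L" if "p \<in> {1..n}" "q \<in> {1..n}" for p q
    unfolding rop_def using v that by (intro Vsp_add Vsp_mult Vsp_sum Vsp_Eu) auto
  moreover have "nuop \<nu> L i v \<in> Vsp n L"
    unfolding nuop_def using v i by (intro Vsp_sum Vsp_mult Vsp_Eu) auto
  ultimately show ?thesis
    unfolding dunkl_def using v i by (intro Vsp_add Vsp_diff Vsp_mult Vsp_sum Vsp_euler Vsp_DD) auto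
qed

lemma UbV_lconst_mult: "w \<in> UbV \<chi> n L \<Longrightarrow> (\<lambda>c. lconst s * w c) \<in> UbV \<chi> n L"
  using UbV.smul[of w \<chi> n L s] by (simp add: scaleV_def lconst_def)

lemma UbV_diff: "w \<in> UbV \<chi> n L \<Longrightarrow> w' \<in> UbV \<chi> n L \<Longrightarrow> (\<lambda>c. w c - w' c) \<in> UbV \<chi> n L"
  using UbV.add[of w \<chi> n L "\<lambda>c. lconst (- 1) * w' c"] UbV_lconst_mult[of w' \<chi> n L "- 1"] by simp

lemma UbV_sum: "(\<And>x. x \<in> A \<Longrightarrow> f x \<in> UbV \<chi> n L) \<Longrightarrow> (\<lambda>c. \<Sum>x\<in>A. f x c) \<in> UbV \<chi> n L"
proof (induction A rule: infinite_finite_induct)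
  case (insert x F)
  then show ?case using UbV.add[of "f x" \<chi> n L "\<lambda>c. \<Sum>x\<in>F. f x c"] by simp
qed (simp_all add: UbV.zero)

lemma UbV_hgen: "a \<in> {1..L-1} \<Longrightarrow> v \<in> Vsp n L \<Longrightarrow> hgen n \<chi> a v \<in> UbV \<chi> n L"
  by (rule UbV.gen[of "hgen n \<chi> a"]) (simp_all add: bgens_eq)

lemma UbV_fgen: "a \<in> {1..L-1} \<Longrightarrow> v \<in> Vsp n L \<Longrightarrow> fgen n a v \<in> UbV \<chi> n L"
  by (rule UbV.gen[of "fgen n a"]) (simp_all add: bgens_eq)

lemma UbV_fgen0: "v \<in> Vsp n L \<Longrightarrow> fgen0 n L v \<in> UbV \<chi> n L"
  by (rule UbV.gen[of "fgen0 n L"]) (simp_all add: bgens_eq)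

(* Since U'(b^chi) V lies in V, a word g w with w in U'(b^chi) V is a generator applied to a vector of V. *)
lemma UbV_invariant:
  assumes L: "1 \<le> L"
    and add: "\<And>v w. v \<in> Vsp n L \<Longrightarrow> w \<in> Vsp n L \<Longrightarrow> T (\<lambda>c. v c + w c) = (\<lambda>c. T v c + T w c)"
    and scale: "\<And>v s. v \<in> Vsp n L \<Longrightarrow> T (scaleV s v) = scaleV s (T v)"
    and gens: "\<And>g v. g \<in> bgens \<chi> n L \<Longrightarrow> v \<in> Vsp n L \<Longrightarrow> T (g v) \<in> UbV \<chi> n L"
  shows "w \<in> UbV \<chi> n L \<Longrightarrow> T w \<in> UbV \<chi> n L"
proof (induction rule: UbV.induct)
  case zero
  have "T (\<lambda>c. 0) = scaleV 0 (T (\<lambda>c. 0))"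
    using scale[of "\<lambda>c. 0" 0] by (simp add: scaleV_def)
  then show ?case by (simp add: scaleV_def UbV.zero)
qed (use gens add scale UbV_subset_Vsp[OF L] in \<open>auto intro: UbV.add UbV.smul\<close>)

lemma UbV_invariant_commuting:
  assumes L: "1 \<le> L"
    and Vsp: "\<And>v. v \<in> Vsp n L \<Longrightarrow> T v \<in> Vsp n L"
    and add: "\<And>v w. T (\<lambda>c. v c + w c) = (\<lambda>c. T v c + T w c)"
    and scale: "\<And>v s. T (scaleV s v) = scaleV s (T v)"
    and commute: "\<And>g v. g \<in> bgens \<chi> n L \<Longrightarrow> T (g v) = g (T v)"
    and w: "w \<in> UbV \<chi> n L"
  shows "T w \<in> UbV \<chi> n L"
  by (rule UbV_invariant[OF L _ _ _ w]) (simp_all add: add scale commute Vsp UbV.gen)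

lemma zmul_bgens_commute: "g \<in> bgens \<chi> n L \<Longrightarrow> zmul i e (g v) = g (zmul i e v)"
  unfolding bgens_eq
  by (auto simp: fun_eq_iff zmul_def hgen_def fgen_def fgen0_def Eu_def sum_distrib_left ac_simps
      intro!: sum.cong)

lemma UbV_zmul:
  assumes "1 \<le> L" "i \<in> {1..n}" "w \<in> UbV \<chi> n L"
  shows "zmul i e w \<in> UbV \<chi> n L"
proof (rule UbV_invariant_commuting[OF assms(1) _ _ _ _ assms(3)])
  show "zmul i e (\<lambda>c. v c + w c) = (\<lambda>c. zmul i e v c + zmul i e w c)"
    and "zmul i e (scaleV s v) = scaleV s (zmul i e v)" for v w :: vect and s
    by (simp_all add: zmul_def scaleV_def distrib_left ac_simps)
qed (use assms(2) in \<open>simp_all add: zmul_bgens_commute\<close>)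

lemma sK_bgens_commute:
  assumes i: "i \<in> {1..<n}" and g: "g \<in> bgens \<chi> n L"
  shows "sK i (g v) = g (sK i v)"
proof -
  have i': "i \<in> {1..n}" "Suc i \<in> {1..n}" using i by auto
  have "sK i (hgen n \<chi> a v) = hgen n \<chi> a (sK i v)" for a
    by (simp add: sK_def KV_def Pswap_def hgen_def fun_eq_iff hweight_comp_sw[OF i'] Kswap_lconst_mult)
  moreover have "sK i (fgen n a v) = fgen n a (sK i v)" for a
  proof
    fix c show "sK i (fgen n a v) c = fgen n a (sK i v) c"
      unfolding sK_def KV_def Pswap_def fgen_comp_sw[OF i'] Kswap_sum
      by (simp add: fgen_def Eu_def sK_def KV_def Pswap_def if_distrib[of "Kswap _ _"] cong: if_cong)
  qed
  moreover have "sK i (fgen0 n L v) = fgen0 n L (sK i v)"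
  proof
    fix c show "sK i (fgen0 n L v) c = fgen0 n L (sK i v) c"
      unfolding sK_def KV_def Pswap_def fgen0_comp_sw[OF i'] Kswap_sum Kswap_Zpow_mult
      by (simp add: fgen0_def Eu_def sK_def KV_def Pswap_def if_distrib[of "Kswap _ _"] cong: if_cong)
  qed
  ultimately show ?thesis using g unfolding bgens_eq by auto
qed

lemma UbV_sK:
  assumes "1 \<le> L" "i \<in> {1..<n}" "w \<in> UbV \<chi> n L"
  shows "sK i w \<in> UbV \<chi> n L"
proof (rule UbV_invariant_commuting[OF assms(1) _ _ _ _ assms(3)])
  show "sK i (\<lambda>c. v c + w c) = (\<lambda>c. sK i v c + sK i w c)"
    and "sK i (scaleV s v) = scaleV s (sK i v)" for v w :: vect and s
    by (simp_all add: sK_def KV_def Pswap_def scaleV_def Kswap_add Kswap_lconst_mult[unfolded lconst_def])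
qed (use assms(2) in \<open>simp_all add: sK_bgens_commute[OF assms(2)]\<close>)

lemma fgen_cong:
  assumes "c \<in> cols n L" "a \<in> {1..L-1}" "\<And>c'. c' \<in> cols n L \<Longrightarrow> x c' = y c'"
  shows "fgen n a x c = fgen n a y c"
  unfolding fgen_def Eu_def using assms by (intro sum.cong) (auto simp: cols_upd)

lemma fgen0_cong:
  assumes "c \<in> cols n L" "1 \<le> L" "\<And>c'. c' \<in> cols n L \<Longrightarrow> x c' = y c'"
  shows "fgen0 n L x c = fgen0 n L y c"
  unfolding fgen0_def Eu_def using assms by (intro sum.cong) (auto simp: cols_upd)

context
  fixes \<kappa> :: complex and \<nu> :: "nat \<Rightarrow> complex" and n L i :: nat
  assumes i: "i \<in> {1..n}"
begin

lemma dunkl_add: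
  "v \<in> Vsp n L \<Longrightarrow> w \<in> Vsp n L
    \<Longrightarrow> dunkl \<kappa> \<nu> n L i (\<lambda>c. v c + w c) = (\<lambda>c. dunkl \<kappa> \<nu> n L i v c + dunkl \<kappa> \<nu> n L i w c)"
  using i by (intro Vsp_eqI[where n = n and L = L]) (simp_all add: dunkl_on_cols dunkl_expl_add)

lemma dunkl_scaleV: "v \<in> Vsp n L \<Longrightarrow> dunkl \<kappa> \<nu> n L i (scaleV s v) = scaleV s (dunkl \<kappa> \<nu> n L i v)"
  using i by (intro Vsp_eqI[where n = n and L = L])
    (simp_all add: dunkl_on_cols scaleV_def lconst_def[symmetric] dunkl_expl_scalar_mult[where s = "\<lambda>_. s"])

lemma dunkl_hgen: "v \<in> Vsp n L \<Longrightarrow> dunkl \<kappa> \<nu> n L i (hgen n \<chi> a v) = hgen n \<chi> a (dunkl \<kappa> \<nu> n L i v)"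
proof (rule Vsp_eqI[where n = n and L = L])
  fix c assume "v \<in> Vsp n L" "c \<in> cols n L"
  then show "dunkl \<kappa> \<nu> n L i (hgen n \<chi> a v) c = hgen n \<chi> a (dunkl \<kappa> \<nu> n L i v) c"
    using i by (simp add: dunkl_on_cols dunkl_expl_hgen, simp add: hgen_def dunkl_on_cols)
qed (use i in simp_all)

lemma dunkl_fgen:
  assumes v: "v \<in> Vsp n L" and a: "a \<in> {1..L-1}" and \<nu>: "\<And>x. \<nu> x = of_nat x + \<chi> x / 2"
  shows "dunkl \<kappa> \<nu> n L i (fgen n a v)
       = (\<lambda>c. fgen n a (\<lambda>c. dunkl \<kappa> \<nu> n L i v c + lconst (1 / 2) * (lconst (local_weight a (Suc a) i c) * v c)) c
             + lconst (1 / 2) * hgen n \<chi> a (Eu a (Suc a) i v) c)"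
proof (rule Vsp_eqI[where n = n and L = L])
  fix c assume c: "c \<in> cols n L"
  then show "dunkl \<kappa> \<nu> n L i (fgen n a v) c
      = fgen n a (\<lambda>c. dunkl \<kappa> \<nu> n L i v c + lconst (1 / 2) * (lconst (local_weight a (Suc a) i c) * v c)) c
        + lconst (1 / 2) * hgen n \<chi> a (Eu a (Suc a) i v) c"
  proof -
    have "fgen n a (\<lambda>c. dunkl_expl \<kappa> \<nu> n L i v c + lconst (1 / 2) * (lconst (local_weight a (Suc a) i c) * v c)) c
        = fgen n a (\<lambda>c. dunkl \<kappa> \<nu> n L i v c + lconst (1 / 2) * (lconst (local_weight a (Suc a) i c) * v c)) c"
      by (rule fgen_cong[OF c a]) (simp add: dunkl_on_cols[OF _ i])
    then show ?thesis unfolding dunkl_on_cols[OF c i] dunkl_expl_fgen[OF v i \<nu>] by simp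
  qed
qed (use v a i in \<open>auto intro!: Vsp_add Vsp_fgen Vsp_lconst_mult Vsp_mult Vsp_hgen Vsp_Eu\<close>)

lemma dunkl_fgen0:
  assumes v: "v \<in> Vsp n L" and L: "2 \<le> L"
    and \<nu>: "\<And>x. \<nu> x = of_nat x + \<chi> x / 2" and \<kappa>: "\<kappa> = of_nat L"
  shows "dunkl \<kappa> \<nu> n L i (fgen0 n L v)
       = (\<lambda>c. fgen0 n L (\<lambda>c. dunkl \<kappa> \<nu> n L i v c + lconst (1 / 2) * (lconst (local_weight L 1 i c) * v c)) c
             - lconst (1 / 2) * (\<Sum>a\<in>{1..L-1}. hgen n \<chi> a (\<lambda>c. Zpow i (- 1) * Eu L 1 i v c) c))"
proof (rule Vsp_eqI[where n = n and L = L])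
  fix c assume c: "c \<in> cols n L"
  have L1: "1 \<le> L" using L by simp
  show "dunkl \<kappa> \<nu> n L i (fgen0 n L v) c
      = fgen0 n L (\<lambda>c. dunkl \<kappa> \<nu> n L i v c + lconst (1 / 2) * (lconst (local_weight L 1 i c) * v c)) c
        - lconst (1 / 2) * (\<Sum>a\<in>{1..L-1}. hgen n \<chi> a (\<lambda>c. Zpow i (- 1) * Eu L 1 i v c) c)"
  proof -
    have "fgen0 n L (\<lambda>c. dunkl_expl \<kappa> \<nu> n L i v c + lconst (1 / 2) * (lconst (local_weight L 1 i c) * v c)) c
        = fgen0 n L (\<lambda>c. dunkl \<kappa> \<nu> n L i v c + lconst (1 / 2) * (lconst (local_weight L 1 i c) * v c)) c"
      by (rule fgen0_cong[OF c L1]) (simp add: dunkl_on_cols[OF _ i])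
    then show ?thesis unfolding dunkl_on_cols[OF c i] dunkl_expl_fgen0[OF v i c L \<nu> \<kappa>] by simp
  qed
qed (use v L i in \<open>simp_all add: Vsp_sum\<close>)

lemma UbV_dunkl:
  assumes L: "2 \<le> L" and \<nu>: "\<And>x. \<nu> x = of_nat x + \<chi> x / 2" and \<kappa>: "\<kappa> = of_nat L"
    and w: "w \<in> UbV \<chi> n L"
  shows "dunkl \<kappa> \<nu> n L i w \<in> UbV \<chi> n L"
proof (rule UbV_invariant[OF _ dunkl_add dunkl_scaleV _ w])
  show "1 \<le> L" using L by simp
  fix g v assume g: "g \<in> bgens \<chi> n L" and v: "v \<in> Vsp n L"
  have dv: "dunkl \<kappa> \<nu> n L i v \<in> Vsp n L" using v i by simp
  have E: "Eu a (Suc a) i v \<in> Vsp n L" if "a \<in> {1..L-1}" for a using v i that by (intro Vsp_Eu) auto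
  have Y: "(\<lambda>c. Zpow i (- 1) * Eu L 1 i v c) \<in> Vsp n L" using v i L by simp
  from g consider (h) a where "a \<in> {1..L-1}" "g = hgen n \<chi> a" | (f) a where "a \<in> {1..L-1}" "g = fgen n a"
    | (f0) "g = fgen0 n L"
    unfolding bgens_eq by blast
  then show "dunkl \<kappa> \<nu> n L i (g v) \<in> UbV \<chi> n L"
  proof cases
    case h
    then show ?thesis using dunkl_hgen[OF v] UbV_hgen[OF _ dv] by simp
  next
    case f
    have "dunkl \<kappa> \<nu> n L i (fgen n a v) \<in> UbV \<chi> n L"
      unfolding dunkl_fgen[OF v f(1) \<nu>] using dv v E f(1)
      by (intro UbV.add UbV_fgen UbV_lconst_mult UbV_hgen) simp_all
    then show ?thesis using f(2) by simp
  next
    case f0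
    have "dunkl \<kappa> \<nu> n L i (fgen0 n L v) \<in> UbV \<chi> n L"
      unfolding dunkl_fgen0[OF v L \<nu> \<kappa>] using dv v Y
      by (intro UbV_diff UbV_fgen0 UbV_lconst_mult UbV_sum UbV_hgen) simp_all
    then show ?thesis using f0 by simp
  qed
qed

end

theorem proposition2p9:
  fixes n L :: nat and \<chi> :: "nat \<Rightarrow> complex"
  assumes "L \<ge> 2" and "n \<ge> 1"
  defines "\<kappa> \<equiv> of_nat L"
      and "\<nu> \<equiv> (\<lambda>a. of_nat a + \<chi> a / 2)"
  shows "\<forall>w \<in> UbV \<chi> n L.
           (\<forall>i \<in> {1..n}. zmul i 1 w \<in> UbV \<chi> n L \<and> zmul i (-1) w \<in> UbV \<chi> n L
                        \<and> dunkl \<kappa> \<nu> n L i w \<in> UbV \<chi> n L)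
         \<and> (\<forall>i \<in> {1..<n}. sK i w \<in> UbV \<chi> n L)"
proof -
  have L: "1 \<le> L" using assms(1) by simp
  show ?thesis
    using UbV_zmul[OF L] UbV_sK[OF L] UbV_dunkl[OF _ assms(1)]
    by (simp add: \<kappa>_def \<nu>_def)
qed

end
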